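(* The function $f$ has a unique global maximiser. Writing $x=(\mathrm{vec}(z^Q),z^S)\in\mathbb{R}^{n^2+n}$, where $\mathrm{vec}$ stacks the columns of $z^Q$ (so $z^{Q,i,j}$ occupies position $(j-1)n+i$), the first-order conditions $\nabla f=0$ are equivalent to the symmetric linear system $$\begin{pmatrix}H_{QQ}&H_{QS}\\ H_{QS}^\top&H_{SS}\end{pmatrix}\begin{pmatrix}\mathrm{vec}(z^Q)\\ z^S\end{pmatrix}=-\begin{pmatrix}b_Q\\ b_S\end{pmatrix},$$ with $$H_{SS}=-\tfrac{\sigma^2}{n}\Gamma-\tfrac{\gamma_{\rm P}\sigma^2}{n^2}J,\qquad H_{QS}=-\tfrac{\sigma}{n^{3/2}}(\rho\odot\nu)\otimes\Gamma-\tfrac{\gamma_{\rm P}\sigma}{n^{5/2}}(\rho\odot\nu)\otimes J,$$ $$H_{QQ}=-\tfrac1n(N^2\otimes\Gamma)-\tfrac{\gamma_{\rm P}}{n^2}(N^2\otimes J)-\tfrac1n\mathrm{BlockDiag}\big[(1/c_1)E_{11},\dots,(1/c_n)E_{nn}\big],$$ $b_Q=\mathrm{vec}\big((b_Q^{i,j})_{i,j}\big)$ with $b_Q^{i,j}=\frac{1}{nc_i}\mathbf 1_{\{i=j\}}+\frac{\gamma_{\rm P}}{n^2}\nu_j^2$, and $b_S=\frac{\gamma_{\rm P}\sigma}{n^{5/2}}\big(\sum_{i=1}^n\rho_i\nu_i\big)\mathbf 1_n$. This system has a unique solution, which is the maximiser of $f$, given by $$z^{S,\star}=(S_n-y_ns_ns_n^\top)\ell_n,\qquad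 z^{Q,i,j,\star}=\frac{q^\star_{i,j}}{\nu_j},$$ where $$q^\star_{i,j}=\begin{cases}\alpha_{i,n}K_{j,n}(z^{S,\star})-\frac{\sigma}{\sqrt n}\rho_jz^{S,i,\star},& j\ne i,\\[2pt] A_i^{-1}\Big(\frac{\gamma_{\rm P}}{n}K_{i,n}(z^{S,\star})-\gamma_i\frac{\sigma}{\sqrt n}\rho_iz^{S,i,\star}+\frac{1}{c_i\nu_i}\Big),& j=i.\end{cases}$$
   Context: Fix an integer $n\ge1$ and parameters $\sigma>0$, $\gamma_{\rm P}>0$, and for each $i\in\{1,\dots,n\}$: $c_i>0$, $\gamma_i>0$, $\nu_i>0$, $\rho_i\in(-1,1)$. Write $\nu=(\nu_1,\dots,\nu_n)^\top$, $\rho=(\rho_1,\dots,\rho_n)^\top$. The variables are a matrix $z^Q=(z^{Q,i,j})_{i,j}\in\mathbb{R}^{n\times n}$ ($i$ row, $j$ column) and a vector $z^S=(z^{S,1},\dots,z^{S,n})^\top\in\mathbb{R}^n$. Define $f:\mathbb{R}^{n\times n}\times\mathbb{R}^n\to\mathbb{R}$ by $$f(z^Q,z^S)=-\frac1n\sum_{i=1}^n\Big(\frac{(z^{Q,i,i})^2}{2c_i}+\frac{\gamma_i}{2}\sum_{j=1}^n\nu_j^2(z^{Q,i,j})^2+\frac{\gamma_i\sigma^2}{2}(z^{S,i})^2+\frac{\gamma_i\sigma}{\sqrt n}z^{S,i}\sum_{j=1}^n\rho_j\nu_jz^{Q,i,j}-\frac{z^{Q,i,i}}{c_i}\Big)-\frac{\gamma_{\rm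 P}}{2n^2}\sum_{i=1}^n\Big(\Big(\nu_i-\nu_i\sum_{j=1}^nz^{Q,j,i}-\frac{\rho_i\sigma}{\sqrt n}\sum_{j=1}^nz^{S,j}\Big)^2+\frac{(1-\rho_i^2)\sigma^2}{n}\Big(\sum_{j=1}^nz^{S,j}\Big)^2\Big).$$ Notation: $\Gamma=\mathrm{Diag}[\gamma_1,\dots,\gamma_n]$, $N=\mathrm{Diag}[\nu_1,\dots,\nu_n]$, $J=\mathbf 1_n\mathbf 1_n^\top$, $E_{ii}$ the $n\times n$ matrix with a single $1$ at $(i,i)$, $\otimes$ Kronecker product, $\odot$ entrywise product. Set $\lambda_n=\frac{\gamma_{\rm P}\sigma^2}{n^3}\sum_{j=1}^n(1-\rho_j^2)$ and for each $i$: $A_i=\gamma_i+\frac{1}{c_i\nu_i^2}$, $\alpha_{i,n}=\frac{\gamma_{\rm P}}{n\gamma_i}$, $\kappa_{i,n}=1+\frac{\gamma_{\rm P}}{n}\Big(\sum_{\ell=1}^n\frac1{\gamma_\ell}-\frac1{\gamma_i}\big(1-\frac{\gamma_i}{A_i}\big)\Big)$, $d_{i,n}=\kappa_{i,n}^{-1}\big(\nu_i-\frac{1}{c_i\nu_iA_i}\big)$, $m_{i,n}=\frac{\sigma}{\sqrt n\,\kappa_{i,n}}\rho_i\big(1-\frac{\gamma_i}{A_i}\big)$, $K_{i,n}(z^S)=d_{i,n}-m_{i,n}z^{S,i}$, $\mu_{i,n}=\gamma_i\frac{\sigma^2}{n}\Big(1-\frac1n\sum_{j=1}^n\rho_j^2+\big(1-\frac{\gamma_i}{A_i}\big)\frac{\rho_i^2}{n}\Big)+\frac{\gamma_{\rm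 P}\sigma^2\rho_i^2}{\kappa_{i,n}n^3}\big(1-\frac{\gamma_i}{A_i}\big)^2$, $\ell_{i,n}=\frac{\gamma_{\rm P}\sigma\rho_i}{n^{5/2}}\big(1-\frac{\gamma_i}{A_i}\big)d_{i,n}-\frac{\gamma_i\sigma}{n^{3/2}}\frac{\rho_i}{A_ic_i\nu_i}$, $s_{i,n}=\mu_{i,n}^{-1}$. Let $\ell_n=(\ell_{i,n})_i$, $s_n=(s_{i,n})_i$, $S_n=\mathrm{Diag}[s_n]$, $y_n=\frac{\lambda_n}{1+\lambda_n\mathbf 1_n^\top s_n}$. *)

theory Defs
  imports "HOL-Analysis.Analysis"
begin

text \<open>Vectors in R^n are real^'n, n x n matrices real^'n^'n (row index first).
  vec(zQ) is represented as an element of real^('n \<times> 'n), the entry at (i,j)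
  being zQ$i$j (this corresponds to position (j-1)n+i: j is the outer/block index).
  The full unknown (vec zQ, zS) in R^(n^2+n) lives in real^(('n \<times> 'n) + 'n).\<close>

definition vecm :: "real^'n^'m \<Rightarrow> real^('m \<times> 'n)" where
  "vecm Z = (\<chi> p. Z $ fst p $ snd p)"

text \<open>Kronecker product, consistent with column stacking: block index = outer (second)
  component of the pair, position inside block = inner (first) component.\<close>
definition kron :: "real^'b^'a \<Rightarrow> real^'d^'c \<Rightarrow> real^('d \<times> 'b)^('c \<times> 'a)" where
  "kron A B = (\<chi> p q. A $ snd p $ snd q * B $ fst p $ fst q)"

definition kronv :: "real^'a \<Rightarrow> real^'d^'c \<Rightarrow> real^'d^('c \<times> 'a)" where
  "kronv v B = (\<chi> p k. v $ snd p * B $ fst p $ k)"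

definition Diag :: "real^'n \<Rightarrow> real^'n^'n" where
  "Diag v = (\<chi> i j. if i = j then v $ i else 0)"

definition Jm :: "real^'n^'n" where
  "Jm = (\<chi> i j. 1)"

definition Eii :: "'n \<Rightarrow> real^'n^'n" where
  "Eii i = (\<chi> k l. if k = i \<and> l = i then 1 else 0)"

definition BlockDiag :: "('n::finite \<Rightarrow> real^'m^'m) \<Rightarrow> real^('m \<times> 'n)^('m \<times> 'n)" where
  "BlockDiag M = (\<chi> p q. if snd p = snd q then M (snd p) $ fst p $ fst q else 0)"

definition hadamard :: "real^'n \<Rightarrow> real^'n \<Rightarrow> real^'n" where
  "hadamard u v = (\<chi> i. u $ i * v $ i)"

definition blockmat :: "real^'p^'p \<Rightarrow> real^'s^'p \<Rightarrow> real^'s^'s \<Rightarrow> real^('p + 's)^('p + 's)" where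
  "blockmat HQQ HQS HSS = (\<chi> a b. case (a, b) of
      (Inl p, Inl q) \<Rightarrow> HQQ $ p $ q
    | (Inl p, Inr k) \<Rightarrow> HQS $ p $ k
    | (Inr k, Inl q) \<Rightarrow> HQS $ q $ k
    | (Inr k, Inr l) \<Rightarrow> HSS $ k $ l)"

definition stack :: "real^'p \<Rightarrow> real^'s \<Rightarrow> real^('p + 's)" where
  "stack u v = (\<chi> a. case a of Inl p \<Rightarrow> u $ p | Inr k \<Rightarrow> v $ k)"

definition fobj :: "real \<Rightarrow> real \<Rightarrow> real^'n \<Rightarrow> real^'n \<Rightarrow> real^'n \<Rightarrow> real^'n
    \<Rightarrow> real^'n^'n \<Rightarrow> real^'n \<Rightarrow> real" where
  "fobj \<sigma> \<gamma>P c \<gamma> \<nu> \<rho> zQ zS =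
    (let n = real CARD('n) in
     - (1 / n) * (\<Sum>i\<in>UNIV.
          (zQ$i$i)\<^sup>2 / (2 * c$i)
        + \<gamma>$i / 2 * (\<Sum>j\<in>UNIV. (\<nu>$j)\<^sup>2 * (zQ$i$j)\<^sup>2)
        + \<gamma>$i * \<sigma>\<^sup>2 / 2 * (zS$i)\<^sup>2
        + \<gamma>$i * \<sigma> / sqrt n * zS$i * (\<Sum>j\<in>UNIV. \<rho>$j * \<nu>$j * zQ$i$j)
        - zQ$i$i / c$i)
     - \<gamma>P / (2 * n\<^sup>2) * (\<Sum>i\<in>UNIV.
          (\<nu>$i - \<nu>$i * (\<Sum>j\<in>UNIV. zQ$j$i) - \<rho>$i * \<sigma> / sqrt n * (\<Sum>j\<in>UNIV. zS$j))\<^sup>2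
        + (1 - (\<rho>$i)\<^sup>2) * \<sigma>\<^sup>2 / n * (\<Sum>j\<in>UNIV. zS$j)\<^sup>2))"

definition HSS :: "real \<Rightarrow> real \<Rightarrow> real^'n \<Rightarrow> real^'n^'n" where
  "HSS \<sigma> \<gamma>P \<gamma> = (let n = real CARD('n) in
     (- (\<sigma>\<^sup>2 / n)) *\<^sub>R Diag \<gamma> - (\<gamma>P * \<sigma>\<^sup>2 / n\<^sup>2) *\<^sub>R Jm)"

definition HQS :: "real \<Rightarrow> real \<Rightarrow> real^'n \<Rightarrow> real^'n \<Rightarrow> real^'n \<Rightarrow> real^'n^('n \<times> 'n)" where
  "HQS \<sigma> \<gamma>P \<gamma> \<nu> \<rho> = (let n = real CARD('n) in
     (- (\<sigma> / n powr (3/2))) *\<^sub>R kronv (hadamard \<rho> \<nu>) (Diag \<gamma>)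
     - (\<gamma>P * \<sigma> / n powr (5/2)) *\<^sub>R kronv (hadamard \<rho> \<nu>) Jm)"

definition HQQ :: "real \<Rightarrow> real^'n \<Rightarrow> real^'n \<Rightarrow> real^'n \<Rightarrow> real^('n \<times> 'n)^('n \<times> 'n)" where
  "HQQ \<gamma>P c \<gamma> \<nu> = (let n = real CARD('n) in
     (- (1 / n)) *\<^sub>R kron (Diag (hadamard \<nu> \<nu>)) (Diag \<gamma>)
     - (\<gamma>P / n\<^sup>2) *\<^sub>R kron (Diag (hadamard \<nu> \<nu>)) Jm
     - (1 / n) *\<^sub>R BlockDiag (\<lambda>i. (1 / c$i) *\<^sub>R Eii i))"

definition bQ :: "real \<Rightarrow> real^'n \<Rightarrow> real^'n \<Rightarrow> real^('n \<times> 'n)" where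
  "bQ \<gamma>P c \<nu> = (let n = real CARD('n) in
     vecm (\<chi> i j. (if i = j then 1 / (n * c$i) else 0) + \<gamma>P / n\<^sup>2 * (\<nu>$j)\<^sup>2))"

definition bS :: "real \<Rightarrow> real \<Rightarrow> real^'n \<Rightarrow> real^'n \<Rightarrow> real^'n" where
  "bS \<sigma> \<gamma>P \<nu> \<rho> = (let n = real CARD('n) in
     (\<chi> k. \<gamma>P * \<sigma> / n powr (5/2) * (\<Sum>i\<in>UNIV. \<rho>$i * \<nu>$i)))"

definition Hfull :: "real \<Rightarrow> real \<Rightarrow> real^'n \<Rightarrow> real^'n \<Rightarrow> real^'n \<Rightarrow> real^'n
    \<Rightarrow> real^(('n \<times> 'n) + 'n)^(('n \<times> 'n) + 'n)" where
  "Hfull \<sigma> \<gamma>P c \<gamma> \<nu> \<rho> = blockmat (HQQ \<gamma>P c \<gamma> \<nu>) (HQS \<sigma> \<gamma>P \<gamma> \<nu> \<rho>) (HSS \<sigma> \<gamma>P \<gamma>)"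

definition bfull :: "real \<Rightarrow> real \<Rightarrow> real^'n \<Rightarrow> real^'n \<Rightarrow> real^'n \<Rightarrow> real^(('n \<times> 'n) + 'n)" where
  "bfull \<sigma> \<gamma>P c \<nu> \<rho> = stack (bQ \<gamma>P c \<nu>) (bS \<sigma> \<gamma>P \<nu> \<rho>)"

definition Acoef :: "real^'n \<Rightarrow> real^'n \<Rightarrow> real^'n \<Rightarrow> 'n \<Rightarrow> real" where
  "Acoef c \<gamma> \<nu> i = \<gamma>$i + 1 / (c$i * (\<nu>$i)\<^sup>2)"

definition alphacoef :: "real \<Rightarrow> real^'n \<Rightarrow> 'n \<Rightarrow> real" where
  "alphacoef \<gamma>P \<gamma> i = \<gamma>P / (real CARD('n) * \<gamma>$i)"

definition kappacoef :: "real \<Rightarrow> real^'n \<Rightarrow> real^'n \<Rightarrow> real^'n \<Rightarrow> 'n \<Rightarrow> real" where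
  "kappacoef \<gamma>P c \<gamma> \<nu> i = 1 + \<gamma>P / real CARD('n) *
     ((\<Sum>l\<in>UNIV. 1 / \<gamma>$l) - 1 / \<gamma>$i * (1 - \<gamma>$i / Acoef c \<gamma> \<nu> i))"

definition dcoef :: "real \<Rightarrow> real^'n \<Rightarrow> real^'n \<Rightarrow> real^'n \<Rightarrow> 'n \<Rightarrow> real" where
  "dcoef \<gamma>P c \<gamma> \<nu> i = (1 / kappacoef \<gamma>P c \<gamma> \<nu> i) *
     (\<nu>$i - 1 / (c$i * \<nu>$i * Acoef c \<gamma> \<nu> i))"

definition mcoef :: "real \<Rightarrow> real \<Rightarrow> real^'n \<Rightarrow> real^'n \<Rightarrow> real^'n \<Rightarrow> real^'n \<Rightarrow> 'n \<Rightarrow> real" where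
  "mcoef \<sigma> \<gamma>P c \<gamma> \<nu> \<rho> i = \<sigma> / (sqrt (real CARD('n)) * kappacoef \<gamma>P c \<gamma> \<nu> i) *
     \<rho>$i * (1 - \<gamma>$i / Acoef c \<gamma> \<nu> i)"

definition Kfun :: "real \<Rightarrow> real \<Rightarrow> real^'n \<Rightarrow> real^'n \<Rightarrow> real^'n \<Rightarrow> real^'n \<Rightarrow> 'n \<Rightarrow> real^'n \<Rightarrow> real" where
  "Kfun \<sigma> \<gamma>P c \<gamma> \<nu> \<rho> i zS = dcoef \<gamma>P c \<gamma> \<nu> i - mcoef \<sigma> \<gamma>P c \<gamma> \<nu> \<rho> i * zS$i"

definition mucoef :: "real \<Rightarrow> real \<Rightarrow> real^'n \<Rightarrow> real^'n \<Rightarrow> real^'n \<Rightarrow> real^'n \<Rightarrow> 'n \<Rightarrow> real" where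
  "mucoef \<sigma> \<gamma>P c \<gamma> \<nu> \<rho> i = (let n = real CARD('n); A = Acoef c \<gamma> \<nu> i in
     \<gamma>$i * \<sigma>\<^sup>2 / n * (1 - 1 / n * (\<Sum>j\<in>UNIV. (\<rho>$j)\<^sup>2) + (1 - \<gamma>$i / A) * (\<rho>$i)\<^sup>2 / n)
     + \<gamma>P * \<sigma>\<^sup>2 * (\<rho>$i)\<^sup>2 / (kappacoef \<gamma>P c \<gamma> \<nu> i * n ^ 3) * (1 - \<gamma>$i / A)\<^sup>2)"

definition ellcoef :: "real \<Rightarrow> real \<Rightarrow> real^'n \<Rightarrow> real^'n \<Rightarrow> real^'n \<Rightarrow> real^'n \<Rightarrow> 'n \<Rightarrow> real" where
  "ellcoef \<sigma> \<gamma>P c \<gamma> \<nu> \<rho> i = (let n = real CARD('n); A = Acoef c \<gamma> \<nu> i in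
     \<gamma>P * \<sigma> * \<rho>$i / n powr (5/2) * (1 - \<gamma>$i / A) * dcoef \<gamma>P c \<gamma> \<nu> i
     - \<gamma>$i * \<sigma> / n powr (3/2) * \<rho>$i / (A * c$i * \<nu>$i))"

definition lambdacoef :: "real \<Rightarrow> real \<Rightarrow> real^'n \<Rightarrow> real" where
  "lambdacoef \<sigma> \<gamma>P \<rho> = \<gamma>P * \<sigma>\<^sup>2 / real CARD('n) ^ 3 * (\<Sum>j\<in>UNIV. 1 - (\<rho>$j)\<^sup>2)"

definition svec :: "real \<Rightarrow> real \<Rightarrow> real^'n \<Rightarrow> real^'n \<Rightarrow> real^'n \<Rightarrow> real^'n \<Rightarrow> real^'n" where
  "svec \<sigma> \<gamma>P c \<gamma> \<nu> \<rho> = (\<chi> i. 1 / mucoef \<sigma> \<gamma>P c \<gamma> \<nu> \<rho> i)"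

definition ellvec :: "real \<Rightarrow> real \<Rightarrow> real^'n \<Rightarrow> real^'n \<Rightarrow> real^'n \<Rightarrow> real^'n \<Rightarrow> real^'n" where
  "ellvec \<sigma> \<gamma>P c \<gamma> \<nu> \<rho> = (\<chi> i. ellcoef \<sigma> \<gamma>P c \<gamma> \<nu> \<rho> i)"

definition ycoef :: "real \<Rightarrow> real \<Rightarrow> real^'n \<Rightarrow> real^'n \<Rightarrow> real^'n \<Rightarrow> real^'n \<Rightarrow> real" where
  "ycoef \<sigma> \<gamma>P c \<gamma> \<nu> \<rho> = lambdacoef \<sigma> \<gamma>P \<rho> /
     (1 + lambdacoef \<sigma> \<gamma>P \<rho> * (\<Sum>i\<in>UNIV. svec \<sigma> \<gamma>P c \<gamma> \<nu> \<rho> $ i))"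

definition zSstar :: "real \<Rightarrow> real \<Rightarrow> real^'n \<Rightarrow> real^'n \<Rightarrow> real^'n \<Rightarrow> real^'n \<Rightarrow> real^'n" where
  "zSstar \<sigma> \<gamma>P c \<gamma> \<nu> \<rho> = (let s = svec \<sigma> \<gamma>P c \<gamma> \<nu> \<rho> in
     (Diag s - ycoef \<sigma> \<gamma>P c \<gamma> \<nu> \<rho> *\<^sub>R (\<chi> i j. s$i * s$j)) *v ellvec \<sigma> \<gamma>P c \<gamma> \<nu> \<rho>)"

definition qstar :: "real \<Rightarrow> real \<Rightarrow> real^'n \<Rightarrow> real^'n \<Rightarrow> real^'n \<Rightarrow> real^'n \<Rightarrow> 'n \<Rightarrow> 'n \<Rightarrow> real" where
  "qstar \<sigma> \<gamma>P c \<gamma> \<nu> \<rho> i j = (let n = real CARD('n); zS = zSstar \<sigma> \<gamma>P c \<gamma> \<nu> \<rho> in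
     if j \<noteq> i then alphacoef \<gamma>P \<gamma> i * Kfun \<sigma> \<gamma>P c \<gamma> \<nu> \<rho> j zS - \<sigma> / sqrt n * \<rho>$j * zS$i
     else (1 / Acoef c \<gamma> \<nu> i) * (\<gamma>P / n * Kfun \<sigma> \<gamma>P c \<gamma> \<nu> \<rho> i zS
            - \<gamma>$i * \<sigma> / sqrt n * \<rho>$i * zS$i + 1 / (c$i * \<nu>$i)))"

definition zQstar :: "real \<Rightarrow> real \<Rightarrow> real^'n \<Rightarrow> real^'n \<Rightarrow> real^'n \<Rightarrow> real^'n \<Rightarrow> real^'n^'n" where
  "zQstar \<sigma> \<gamma>P c \<gamma> \<nu> \<rho> = (\<chi> i j. qstar \<sigma> \<gamma>P c \<gamma> \<nu> \<rho> i j / \<nu>$j)"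

end

(*
  Stacking the unknowns into X = (vec zQ, zS), the objective is the quadratic function
  1/2 X.H X + b.X + const with the symmetric matrix H = Hfull and b = bfull. Completing the
  squares in f shows that X.H X is minus a sum of nonnegative terms, among them
  sum_i gamma_i sum_j (nu_j zQ_ij + sigma rho_j zS_i / sqrt n)^2 and
  sigma^2 (1 - |rho|^2/n) sum_k gamma_k zS_k^2; since |rho_j| < 1 these vanish only at X = 0.
  So H is negative definite, f is strictly concave, its critical points are the solutions of
  H X = -b, and there is at most one of them.

  The explicit solution comes from the substitution q_ij = nu_j zQ_ij. Writing K_j for the
  residual nu_j - sum_i q_ij - rho_j sigma S / sqrt n (S the sum of zS), the zQ-equations express
  q_ij through K_j and zS_i; summing them over i turns the definition of K_j into
  kappa_j K_j = nu_j - 1/(c_j nu_j A_j) - (sigma/sqrt n) rho_j (1 - gamma_j/A_j) zS_j.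
  Substituting into the zS-equations, the terms in sum_j rho_j K_j cancel and what is left is
  mu_k zS_k + lambda S = l_k, which the Sherman-Morrison formula solves.
*)

theory Submission
  imports Defs
begin

lemma sum_UNIV_sum:
  "(\<Sum>a\<in>UNIV. f a) = (\<Sum>p\<in>UNIV. f (Inl p)) + (\<Sum>k\<in>UNIV. f (Inr k))"
  for f :: "'a::finite + 'b::finite \<Rightarrow> 'c::comm_monoid_add"
proof -
  have "(\<Sum>a\<in>UNIV. f a) = sum f (range Inl) + sum f (range Inr)"
    unfolding UNIV_sum by (rule sum.union_disjoint) auto
  then show ?thesis
    by (simp add: sum.reindex)
qed

lemma sum_UNIV_prod:
  "(\<Sum>p\<in>UNIV. f p) = (\<Sum>i\<in>UNIV. \<Sum>j\<in>UNIV. f (i, j))"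
  for f :: "'a::finite \<times> 'b::finite \<Rightarrow> 'c::comm_monoid_add"
  by (simp add: sum.cartesian_product flip: UNIV_Times_UNIV)

lemma sum_if_zero: "(\<Sum>j\<in>A. if P then f j else 0) = (if P then (\<Sum>j\<in>A. f j) else 0)"
  by simp

lemma if_zero_mult: "(if P then a else 0) * z = (if P then a * z else (0::'a::mult_zero))"
  and mult_if_zero: "z * (if P then a else 0) = (if P then z * a else (0::'a::mult_zero))"
  by simp_all

lemma sum_scale: "(\<And>i. f i = a * g i / k) \<Longrightarrow> (\<Sum>i\<in>A. f i) = a * (\<Sum>i\<in>A. g i) / (k::real)"
  by (simp add: sum_distrib_left sum_divide_distrib)

lemma double_sum_scale:
  "(\<And>i j. f i j = a * g i j / k) \<Longrightarrow>
    (\<Sum>i\<in>A. \<Sum>j\<in>B. f i j) = a * (\<Sum>i\<in>A. \<Sum>j\<in>B. g i j) / (k::real)"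
  by (simp add: sum_distrib_left sum_divide_distrib)

lemma powr_three_halves: "x > 0 \<Longrightarrow> x powr (3/2) = x * sqrt x"
  using powr_add[of x 1 "1/2"] by (simp add: powr_half_sqrt)

lemma powr_five_halves: "x > 0 \<Longrightarrow> x powr (5/2) = x^2 * sqrt x"
  using powr_add[of x 2 "1/2"] by (simp add: powr_half_sqrt)

section \<open>Concave quadratic functions\<close>

lemma inner_symmetric_matrix:
  fixes H :: "real^'m^'m"
  assumes "transpose H = H"
  shows "inner x (H *v y) = inner y (H *v x)"
  by (metis assms dot_lmul_matrix inner_commute vector_transpose_matrix)

definition quadratic :: "real^'m^'m \<Rightarrow> real^'m \<Rightarrow> real^'m \<Rightarrow> real" where
  "quadratic H b x = 1/2 * inner x (H *v x) + inner b x"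

definition negative_definite :: "real^'m^'m \<Rightarrow> bool" where
  "negative_definite H \<longleftrightarrow> (\<forall>x. x \<noteq> 0 \<longrightarrow> inner x (H *v x) < 0)"

lemma quadratic_add:
  assumes "transpose H = H"
  shows "quadratic H b (x + h) = quadratic H b x + inner (H *v x + b) h + 1/2 * inner h (H *v h)"
  using inner_symmetric_matrix[OF assms, of x h]
  by (simp add: quadratic_def matrix_vector_right_distrib inner_add_left inner_add_right
      inner_commute algebra_simps)

lemma has_derivative_quadratic:
  assumes "transpose H = H"
  shows "(quadratic H b has_derivative (\<lambda>h. inner (H *v x + b) h)) (at x)"
proof -
  have "((\<lambda>y. 1/2 * inner y (H *v y) + inner b y) has_derivative
      (\<lambda>h. 1/2 * (inner x (H *v h) + inner h (H *v x)) + inner b h)) (at x)"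
    by (intro has_derivative_add has_derivative_mult_right has_derivative_inner_right
        has_derivative_inner has_derivative_ident
        bounded_linear_imp_has_derivative[OF matrix_vector_mul_bounded_linear])
  moreover have "(\<lambda>h. 1/2 * (inner x (H *v h) + inner h (H *v x)) + inner b h)
      = (\<lambda>h. inner (H *v x + b) h)"
    using inner_symmetric_matrix[OF assms, of x]
    by (simp add: inner_add_left inner_add_right inner_commute)
  ultimately show ?thesis
    by (simp add: quadratic_def[abs_def])
qed

lemma negative_definite_solution_unique:
  assumes "negative_definite H" and "H *v x = H *v y"
  shows "x = y"
proof (rule ccontr)
  assume "x \<noteq> y"
  then have "inner (x - y) (H *v (x - y)) < 0"
    using assms(1) by (simp add: negative_definite_def)
  with assms(2) show False
    by (simp add: matrix_vector_mult_diff_distrib)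
qed

lemma quadratic_less_critical:
  assumes "transpose H = H" and "negative_definite H" and "H *v x0 = - b" and "y \<noteq> x0"
  shows "quadratic H b y < quadratic H b x0"
proof -
  have "quadratic H b y = quadratic H b x0 + 1/2 * inner (y - x0) (H *v (y - x0))"
    using quadratic_add[OF assms(1), of b x0 "y - x0"] assms(3) by simp
  moreover have "inner (y - x0) (H *v (y - x0)) < 0"
    using assms(2,4) by (simp add: negative_definite_def)
  ultimately show ?thesis
    by simp
qed

lemma strict_maximum_unique:
  fixes f :: "'a \<Rightarrow> 'b::linorder"
  assumes "\<And>w. w \<noteq> z \<Longrightarrow> f w < f z"
  shows "\<forall>w. f w \<le> f z" and "\<exists>!z. \<forall>w. f w \<le> f z"
proof -
  show max: "\<forall>w. f w \<le> f z"
  proof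
    show "f w \<le> f z" for w
      using assms[of w] by (cases "w = z") simp_all
  qed
  show "\<exists>!z. \<forall>w. f w \<le> f z"
  proof (rule ex1I[of _ z])
    show "z' = z" if "\<forall>w. f w \<le> f z'" for z'
      using that assms by (metis not_le)
  qed (fact max)
qed

lemma GDERIV_quadratic_comp_zero_iff:
  fixes T :: "'a::real_inner \<Rightarrow> real^'m"
  assumes "transpose H = H" and "bounded_linear T" and "surj T"
  shows "GDERIV (\<lambda>w. quadratic H b (T w) + C) z :> 0 \<longleftrightarrow> H *v T z = - b"
proof -
  have deriv: "((\<lambda>w. quadratic H b (T w) + C) has_derivative
      (\<lambda>h. inner (H *v T z + b) (T h))) (at z)"
    using has_derivative_compose[OF bounded_linear_imp_has_derivative[OF assms(2)]
        has_derivative_quadratic[OF assms(1)]]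
    by (rule has_derivative_add_const)
  show ?thesis
  proof
    assume "GDERIV (\<lambda>w. quadratic H b (T w) + C) z :> 0"
    then have "(\<lambda>h. inner (H *v T z + b) (T h)) = (\<lambda>h. inner h 0)"
      unfolding gderiv_def using deriv by (rule has_derivative_unique[rotated])
    moreover obtain h where "T h = H *v T z + b"
      using assms(3) by (metis surjD)
    ultimately have "inner (H *v T z + b) (H *v T z + b) = 0"
      by (metis inner_zero_right)
    then show "H *v T z = - b"
      by (simp add: eq_neg_iff_add_eq_0)
  next
    assume "H *v T z = - b"
    then show "GDERIV (\<lambda>w. quadratic H b (T w) + C) z :> 0"
      using deriv by (simp add: gderiv_def)
  qed
qed

section \<open>The objective as a quadratic function of the stacked unknowns\<close>

definition stack_pair :: "(real^'n^'m) \<times> (real^'k) \<Rightarrow> real^(('m \<times> 'n) + 'k)" where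
  "stack_pair w = stack (vecm (fst w)) (snd w)"

lemma stack_Inl [simp]: "stack u v $ Inl p = u $ p"
  and stack_Inr [simp]: "stack u v $ Inr k = v $ k"
  by (simp_all add: stack_def)

lemma vecm_nth [simp]: "vecm Z $ (i, j) = Z $ i $ j"
  by (simp add: vecm_def)

lemma bounded_linear_stack_pair: "bounded_linear stack_pair"
proof -
  have "linear stack_pair"
    by (rule linearI) (simp_all add: stack_pair_def stack_def vecm_def vec_eq_iff split: sum.split)
  then show ?thesis
    by (simp add: linear_conv_bounded_linear)
qed

lemma bij_stack_pair: "bij stack_pair"
proof (rule bijI)
  show "inj stack_pair"
  proof (rule injI)
    fix w w' :: "(real^'n::finite^'m::finite) \<times> (real^'k::finite)"
    assume "stack_pair w = stack_pair w'"
    then have "\<And>i j. fst w $ i $ j = fst w' $ i $ j" and "\<And>k. snd w $ k = snd w' $ k"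
      by (metis stack_pair_def stack_Inl vecm_nth, metis stack_pair_def stack_Inr)
    then show "w = w'"
      by (simp add: prod_eq_iff vec_eq_iff)
  qed
  show "surj stack_pair"
  proof (rule surjI)
    fix X :: "real^(('m::finite \<times> 'n::finite) + 'k::finite)"
    show "stack_pair ((\<chi> i j. X $ Inl (i, j)), (\<chi> k. X $ Inr k)) = X"
      by (simp add: stack_pair_def stack_def vecm_def vec_eq_iff split: sum.split)
  qed
qed

lemma HQQ_nth:
  "HQQ \<gamma>P c \<gamma> \<nu> $ (i, j) $ (k, l) =
     (if i = k then (if j = l then - (1 / real CARD('n)) * (\<nu>$j)^2 * \<gamma>$i else 0) else 0)
   + (if j = l then - \<gamma>P / (real CARD('n))^2 * (\<nu>$j)^2 else 0)
   + (if i = j then (if k = j then (if l = j then - (1 / real CARD('n)) / c$j else 0) else 0) else 0)"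
  for c \<gamma> \<nu> :: "real^'n"
  by (auto simp add: HQQ_def kron_def Diag_def Jm_def BlockDiag_def Eii_def hadamard_def Let_def
      power2_eq_square)

lemma HQS_nth:
  "HQS \<sigma> \<gamma>P \<gamma> \<nu> \<rho> $ (i, j) $ k =
     (if i = k then - \<sigma> / (real CARD('n) * sqrt (real CARD('n))) * \<rho>$j * \<nu>$j * \<gamma>$i else 0)
   - \<gamma>P * \<sigma> / ((real CARD('n))^2 * sqrt (real CARD('n))) * \<rho>$j * \<nu>$j"
  for \<gamma> \<nu> \<rho> :: "real^'n"
  by (auto simp add: HQS_def kronv_def Diag_def Jm_def hadamard_def Let_def
      powr_three_halves powr_five_halves)

lemma HSS_nth:
  "HSS \<sigma> \<gamma>P \<gamma> $ k $ l =
     (if k = l then - \<gamma>$k * \<sigma>^2 / real CARD('n) else 0) - \<gamma>P * \<sigma>^2 / (real CARD('n))^2"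
  for \<gamma> :: "real^'n"
  by (auto simp add: HSS_def Diag_def Jm_def Let_def)

lemma transpose_Hfull: "transpose (Hfull \<sigma> \<gamma>P c \<gamma> \<nu> \<rho>) = Hfull \<sigma> \<gamma>P c \<gamma> \<nu> \<rho>"
proof -
  have "Hfull \<sigma> \<gamma>P c \<gamma> \<nu> \<rho> $ b $ a = Hfull \<sigma> \<gamma>P c \<gamma> \<nu> \<rho> $ a $ b" for a b
  proof (cases a; cases b)
    fix p q assume "a = Inl p" and "b = Inl q"
    then show ?thesis
      by (cases p; cases q) (auto simp: Hfull_def blockmat_def HQQ_nth)
  qed (auto simp: Hfull_def blockmat_def HSS_nth)
  then show ?thesis
    by (simp add: transpose_def vec_eq_iff)
qed

lemma Hfull_stack_Inl:
  fixes zQ :: "real^'n^'n"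
  shows "(Hfull \<sigma> \<gamma>P c \<gamma> \<nu> \<rho> *v stack (vecm zQ) zS) $ Inl (i, j) =
    - (1 / real CARD('n)) * (\<nu>$j)^2 * \<gamma>$i * zQ$i$j
    - \<gamma>P / (real CARD('n))^2 * (\<nu>$j)^2 * (\<Sum>k\<in>UNIV. zQ$k$j)
    - (1 / real CARD('n)) * (if i = j then zQ$j$j / c$j else 0)
    - \<sigma> / (real CARD('n) * sqrt (real CARD('n))) * \<rho>$j * \<nu>$j * \<gamma>$i * zS$i
    - \<gamma>P * \<sigma> / ((real CARD('n))^2 * sqrt (real CARD('n))) * \<rho>$j * \<nu>$j * (\<Sum>k\<in>UNIV. zS$k)"
  apply (simp add: matrix_vector_mult_def Hfull_def blockmat_def sum_UNIV_sum sum_UNIV_prod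
     HQQ_nth HQS_nth distrib_right left_diff_distrib sum.distrib sum_subtractf if_zero_mult
     mult_if_zero del: mult_minus_left)
  apply (simp only: sum_if_zero)
  apply (simp add: sum_divide_distrib[symmetric] sum_distrib_left[symmetric] sum_distrib_right[symmetric])
  apply (simp add: algebra_simps mult_if_zero if_zero_mult)
  done

lemma Hfull_stack_Inr:
  fixes zQ :: "real^'n^'n"
  shows "(Hfull \<sigma> \<gamma>P c \<gamma> \<nu> \<rho> *v stack (vecm zQ) zS) $ Inr k =
    - \<sigma> / (real CARD('n) * sqrt (real CARD('n))) * \<gamma>$k * (\<Sum>j\<in>UNIV. \<rho>$j * \<nu>$j * zQ$k$j)
    - \<gamma>P * \<sigma> / ((real CARD('n))^2 * sqrt (real CARD('n)))
        * (\<Sum>i\<in>UNIV. \<Sum>j\<in>UNIV. \<rho>$j * \<nu>$j * zQ$i$j)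
    - \<sigma>^2 / real CARD('n) * \<gamma>$k * zS$k - \<gamma>P * \<sigma>^2 / (real CARD('n))^2 * (\<Sum>l\<in>UNIV. zS$l)"
  apply (simp add: matrix_vector_mult_def Hfull_def blockmat_def sum_UNIV_sum sum_UNIV_prod
     HSS_nth HQS_nth distrib_right left_diff_distrib sum.distrib sum_subtractf if_zero_mult
     mult_if_zero del: mult_minus_left)
  apply (simp only: sum_if_zero)
  apply (simp add: sum_divide_distrib[symmetric] sum_distrib_left[symmetric] sum_distrib_right[symmetric])
  apply (simp add: algebra_simps)
  apply (simp add: sum_negf sum_divide_distrib[symmetric] sum_distrib_left[symmetric])
  done

lemma sum_zQ_Hfull_stack_Inl:
  fixes zQ :: "real^'n^'n"
  defines "n \<equiv> real CARD('n)"
  defines "r \<equiv> sqrt n"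
  shows "(\<Sum>i\<in>UNIV. \<Sum>j\<in>UNIV. zQ$i$j * (Hfull \<sigma> \<gamma>P c \<gamma> \<nu> \<rho> *v stack (vecm zQ) zS) $ Inl (i, j)) =
   - 1/n * (\<Sum>i\<in>UNIV. \<Sum>j\<in>UNIV. (\<nu>$j)^2 * \<gamma>$i * (zQ$i$j)^2)
   - \<gamma>P/n^2 * (\<Sum>j\<in>UNIV. (\<nu>$j)^2 * (\<Sum>k\<in>UNIV. zQ$k$j)^2)
   - 1/n * (\<Sum>j\<in>UNIV. (zQ$j$j)^2 / c$j)
   - \<sigma>/(n*r) * (\<Sum>i\<in>UNIV. \<gamma>$i * zS$i * (\<Sum>j\<in>UNIV. \<rho>$j*\<nu>$j*zQ$i$j))
   - \<gamma>P*\<sigma>/(n^2*r) * (\<Sum>k\<in>UNIV. zS$k) * (\<Sum>i\<in>UNIV. \<Sum>j\<in>UNIV. \<rho>$j*\<nu>$j*zQ$i$j)"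
proof -
  let ?S = "\<Sum>k\<in>UNIV. zS$k"
  let ?P = "\<Sum>i\<in>UNIV. \<Sum>j\<in>UNIV. \<rho>$j*\<nu>$j*zQ$i$j"
  let ?T = "\<Sum>i\<in>UNIV. \<gamma>$i * zS$i * (\<Sum>j\<in>UNIV. \<rho>$j*\<nu>$j*zQ$i$j)"
  have col_sq: "(\<Sum>i\<in>UNIV. \<Sum>j\<in>UNIV. zQ$i$j * ((\<nu>$j)^2 * (\<Sum>k\<in>UNIV. zQ$k$j)))
      = (\<Sum>j\<in>UNIV. (\<nu>$j)^2 * (\<Sum>k\<in>UNIV. zQ$k$j)^2)"
    by (subst sum.swap) (simp add: sum_distrib_left[symmetric] sum_distrib_right[symmetric]
        power2_eq_square mult_ac)
  have diag: "(\<Sum>i\<in>UNIV. \<Sum>j\<in>UNIV. zQ$i$j * (if i = j then zQ$j$j / c$j else 0))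
      = (\<Sum>j\<in>UNIV. (zQ$j$j)^2 / c$j)"
    by (simp add: mult_if_zero power2_eq_square)
  have cross: "?T = (\<Sum>i\<in>UNIV. \<Sum>j\<in>UNIV. \<gamma>$i * zS$i * (\<rho>$j*\<nu>$j*zQ$i$j))"
    by (simp add: sum_distrib_left)
  have e1: "(\<Sum>i\<in>UNIV. \<Sum>j\<in>UNIV. zQ $ i $ j * ((\<nu> $ j)\<^sup>2 * \<gamma> $ i * zQ $ i $ j) / n)
     = 1 * (\<Sum>i\<in>UNIV. \<Sum>j\<in>UNIV. (\<nu>$j)^2 * \<gamma>$i * (zQ$i$j)^2) / n"
    by (rule double_sum_scale) (simp add: power2_eq_square)
  have e2: "(\<Sum>i\<in>UNIV. \<Sum>j\<in>UNIV. zQ $ i $ j * (\<gamma>P * (\<nu> $ j)\<^sup>2 * (\<Sum>k\<in>UNIV. zQ $ k $ j)) / n\<^sup>2)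
     = \<gamma>P * (\<Sum>j\<in>UNIV. (\<nu>$j)^2 * (\<Sum>k\<in>UNIV. zQ$k$j)^2) / n^2"
    by (subst col_sq[symmetric], rule double_sum_scale) simp
  have e3: "(\<Sum>i\<in>UNIV. \<Sum>j\<in>UNIV. zQ $ i $ j * (if i = j then zQ $ j $ j / c $ j else 0) / n)
     = 1 * (\<Sum>j\<in>UNIV. (zQ$j$j)^2 / c$j) / n"
    by (subst diag[symmetric], rule double_sum_scale) simp
  have e4: "(\<Sum>i\<in>UNIV. \<Sum>j\<in>UNIV. zQ $ i $ j * (\<sigma> * \<rho> $ j * \<nu> $ j * \<gamma> $ i * zS $ i) / (n * r))
     = \<sigma> * ?T / (n * r)"
    unfolding cross by (rule double_sum_scale) simp
  have e5: "(\<Sum>i\<in>UNIV. \<Sum>j\<in>UNIV. zQ $ i $ j * (\<gamma>P * \<sigma> * \<rho> $ j * \<nu> $ j * ?S) / (n\<^sup>2 * r))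
     = (\<gamma>P * \<sigma> * ?S) * ?P / (n\<^sup>2 * r)"
    by (rule double_sum_scale) simp
  show ?thesis
    unfolding Hfull_stack_Inl n_def[symmetric] r_def[symmetric]
    by (simp add: right_diff_distrib sum_subtractf sum.distrib sum_negf) (simp only: e1 e2 e3 e4 e5)
qed

lemma sum_zS_Hfull_stack_Inr:
  fixes zQ :: "real^'n^'n"
  defines "n \<equiv> real CARD('n)"
  defines "r \<equiv> sqrt n"
  shows "(\<Sum>k\<in>UNIV. zS$k * (Hfull \<sigma> \<gamma>P c \<gamma> \<nu> \<rho> *v stack (vecm zQ) zS) $ Inr k) =
   - \<sigma>/(n*r) * (\<Sum>i\<in>UNIV. \<gamma>$i * zS$i * (\<Sum>j\<in>UNIV. \<rho>$j*\<nu>$j*zQ$i$j))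
   - \<gamma>P*\<sigma>/(n^2*r) * (\<Sum>k\<in>UNIV. zS$k) * (\<Sum>i\<in>UNIV. \<Sum>j\<in>UNIV. \<rho>$j*\<nu>$j*zQ$i$j)
   - \<sigma>^2/n * (\<Sum>k\<in>UNIV. \<gamma>$k * (zS$k)^2)
   - \<gamma>P*\<sigma>^2/n^2 * (\<Sum>k\<in>UNIV. zS$k)^2"
proof -
  let ?S = "\<Sum>k\<in>UNIV. zS$k"
  let ?P = "\<Sum>i\<in>UNIV. \<Sum>j\<in>UNIV. \<rho>$j*\<nu>$j*zQ$i$j"
  let ?T = "\<Sum>i\<in>UNIV. \<gamma>$i * zS$i * (\<Sum>j\<in>UNIV. \<rho>$j*\<nu>$j*zQ$i$j)"
  have f1: "(\<Sum>k\<in>UNIV. zS $ k * (\<sigma> * \<gamma> $ k * (\<Sum>j\<in>UNIV. \<rho> $ j * \<nu> $ j * zQ $ k $ j)) / (n * r))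
     = \<sigma> * ?T / (n * r)"
    by (rule sum_scale) simp
  have f2: "(\<Sum>k\<in>UNIV. zS $ k * (\<gamma>P * \<sigma> * ?P) / (n\<^sup>2 * r)) = (\<gamma>P * \<sigma> * ?P) * ?S / (n\<^sup>2 * r)"
    by (rule sum_scale) simp
  have f3: "(\<Sum>k\<in>UNIV. zS $ k * (\<sigma>\<^sup>2 * \<gamma> $ k * zS $ k) / n) = \<sigma>\<^sup>2 * (\<Sum>k\<in>UNIV. \<gamma>$k * (zS$k)^2) / n"
    by (rule sum_scale) (simp add: power2_eq_square)
  have f4: "(\<Sum>k\<in>UNIV. zS $ k * (\<gamma>P * \<sigma>\<^sup>2 * ?S) / n\<^sup>2) = (\<gamma>P * \<sigma>\<^sup>2 * ?S) * ?S / n\<^sup>2"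
    by (rule sum_scale) simp
  show ?thesis
    unfolding Hfull_stack_Inr n_def[symmetric] r_def[symmetric]
    apply (simp add: right_diff_distrib sum_subtractf sum.distrib sum_negf)
    apply (simp only: f1 f2 f3 f4)
    apply (simp add: field_simps power2_eq_square)
    done
qed

lemma inner_Hfull_stack:
  fixes zQ :: "real^'n^'n"
  defines "n \<equiv> real CARD('n)"
  defines "r \<equiv> sqrt n"
  shows "inner (stack (vecm zQ) zS) (Hfull \<sigma> \<gamma>P c \<gamma> \<nu> \<rho> *v stack (vecm zQ) zS) =
   - 1/n * (\<Sum>i\<in>UNIV. \<Sum>j\<in>UNIV. (\<nu>$j)^2 * \<gamma>$i * (zQ$i$j)^2)
   - \<gamma>P/n^2 * (\<Sum>j\<in>UNIV. (\<nu>$j)^2 * (\<Sum>k\<in>UNIV. zQ$k$j)^2)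
   - 1/n * (\<Sum>j\<in>UNIV. (zQ$j$j)^2 / c$j)
   - 2*\<sigma>/(n*r) * (\<Sum>i\<in>UNIV. \<gamma>$i * zS$i * (\<Sum>j\<in>UNIV. \<rho>$j*\<nu>$j*zQ$i$j))
   - 2*\<gamma>P*\<sigma>/(n^2*r) * (\<Sum>k\<in>UNIV. zS$k) * (\<Sum>i\<in>UNIV. \<Sum>j\<in>UNIV. \<rho>$j*\<nu>$j*zQ$i$j)
   - \<sigma>^2/n * (\<Sum>k\<in>UNIV. \<gamma>$k * (zS$k)^2)
   - \<gamma>P*\<sigma>^2/n^2 * (\<Sum>k\<in>UNIV. zS$k)^2"
proof -
  have "inner (stack (vecm zQ) zS) (Hfull \<sigma> \<gamma>P c \<gamma> \<nu> \<rho> *v stack (vecm zQ) zS) =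
      (\<Sum>i\<in>UNIV. \<Sum>j\<in>UNIV. zQ$i$j * (Hfull \<sigma> \<gamma>P c \<gamma> \<nu> \<rho> *v stack (vecm zQ) zS) $ Inl (i, j))
      + (\<Sum>k\<in>UNIV. zS$k * (Hfull \<sigma> \<gamma>P c \<gamma> \<nu> \<rho> *v stack (vecm zQ) zS) $ Inr k)"
    by (simp add: inner_vec_def sum_UNIV_sum sum_UNIV_prod)
  then show ?thesis
    unfolding sum_zQ_Hfull_stack_Inl sum_zS_Hfull_stack_Inr n_def[symmetric] r_def[symmetric]
    by (simp add: algebra_simps)
qed

lemma inner_bfull_stack:
  fixes zQ :: "real^'n^'n"
  defines "n \<equiv> real CARD('n)"
  defines "r \<equiv> sqrt n"
  shows "inner (bfull \<sigma> \<gamma>P c \<nu> \<rho>) (stack (vecm zQ) zS) =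
     1/n * (\<Sum>j\<in>UNIV. zQ$j$j / c$j) + \<gamma>P/n^2 * (\<Sum>j\<in>UNIV. (\<nu>$j)^2 * (\<Sum>k\<in>UNIV. zQ$k$j))
     + \<gamma>P*\<sigma>/(n^2*r) * (\<Sum>i\<in>UNIV. \<rho>$i*\<nu>$i) * (\<Sum>k\<in>UNIV. zS$k)"
proof -
  have p5: "n powr (5/2) = n^2 * r"
    unfolding n_def r_def by (simp add: powr_five_halves)
  have diag: "(\<Sum>i\<in>UNIV. \<Sum>j\<in>UNIV. (if i = j then 1 / (n * c$i) else 0) * zQ$i$j)
      = 1 * (\<Sum>j\<in>UNIV. zQ$j$j / c$j) / n"
    by (simp add: if_zero_mult mult_if_zero sum_divide_distrib ac_simps)
  have cols: "(\<Sum>i\<in>UNIV. \<Sum>j\<in>UNIV. \<gamma>P / n\<^sup>2 * (\<nu>$j)\<^sup>2 * zQ$i$j)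
      = \<gamma>P * (\<Sum>j\<in>UNIV. (\<nu>$j)^2 * (\<Sum>k\<in>UNIV. zQ$k$j)) / n^2"
  proof -
    have "(\<Sum>j\<in>UNIV. (\<nu>$j)^2 * (\<Sum>k\<in>UNIV. zQ$k$j)) = (\<Sum>i\<in>UNIV. \<Sum>j\<in>UNIV. (\<nu>$j)\<^sup>2 * zQ$i$j)"
      by (subst sum.swap) (simp add: sum_distrib_left)
    then show ?thesis
      by (simp only:) (rule double_sum_scale, simp)
  qed
  have total: "(\<Sum>k\<in>UNIV. \<gamma>P * \<sigma> / (n^2*r) * (\<Sum>i\<in>UNIV. \<rho>$i * \<nu>$i) * zS$k)
      = (\<gamma>P * \<sigma> * (\<Sum>i\<in>UNIV. \<rho>$i*\<nu>$i)) * (\<Sum>k\<in>UNIV. zS$k) / (n^2*r)"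
    by (rule sum_scale) simp
  show ?thesis
    unfolding inner_vec_def sum_UNIV_sum sum_UNIV_prod bfull_def bQ_def bS_def Let_def
      n_def[symmetric] p5
    apply (simp only: inner_real_def vecm_nth vec_lambda_beta distrib_right sum.distrib
        stack_Inl stack_Inr)
    apply (simp only: diag cols total)
    apply (simp add: field_simps)
    done
qed

lemma fobj_expand:
  fixes zQ :: "real^'n^'n"
  defines "n \<equiv> real CARD('n)"
  defines "r \<equiv> sqrt n"
  shows "fobj \<sigma> \<gamma>P c \<gamma> \<nu> \<rho> zQ zS =
    - 1/n * (1/2 * (\<Sum>j\<in>UNIV. (zQ$j$j)^2 / c$j)
        + 1/2 * (\<Sum>i\<in>UNIV. \<Sum>j\<in>UNIV. (\<nu>$j)^2 * \<gamma>$i * (zQ$i$j)^2)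
        + \<sigma>\<^sup>2/2 * (\<Sum>k\<in>UNIV. \<gamma>$k * (zS$k)^2)
        + \<sigma>/r * (\<Sum>i\<in>UNIV. \<gamma>$i * zS$i * (\<Sum>j\<in>UNIV. \<rho>$j*\<nu>$j*zQ$i$j))
        - (\<Sum>j\<in>UNIV. zQ$j$j / c$j))
    - \<gamma>P/(2*n^2) * ((\<Sum>i\<in>UNIV. (\<nu>$i)^2) - 2 * (\<Sum>j\<in>UNIV. (\<nu>$j)^2 * (\<Sum>k\<in>UNIV. zQ$k$j))
        + (\<Sum>j\<in>UNIV. (\<nu>$j)^2 * (\<Sum>k\<in>UNIV. zQ$k$j)^2)
        - 2*\<sigma>/r * (\<Sum>k\<in>UNIV. zS$k) * (\<Sum>i\<in>UNIV. \<rho>$i*\<nu>$i)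
        + 2*\<sigma>/r * (\<Sum>k\<in>UNIV. zS$k) * (\<Sum>i\<in>UNIV. \<Sum>j\<in>UNIV. \<rho>$j*\<nu>$j*zQ$i$j)
        + \<sigma>\<^sup>2 * (\<Sum>k\<in>UNIV. zS$k)^2)"
proof -
  have n: "n > 0" and r: "r > 0" and rr: "r^2 = n"
    unfolding n_def r_def by simp_all
  let ?S = "\<Sum>k\<in>UNIV. zS$k"
  let ?col = "\<lambda>i. \<Sum>j\<in>UNIV. zQ$j$i"
  have square: "(\<nu>$i - \<nu>$i * ?col i - \<rho>$i * \<sigma> / r * ?S)\<^sup>2 + (1 - (\<rho>$i)\<^sup>2) * \<sigma>\<^sup>2 / n * ?S\<^sup>2
     = (\<nu>$i)^2 - 2 * ((\<nu>$i)^2 * ?col i) + (\<nu>$i)^2 * (?col i)^2 - 2*\<sigma>/r * ?S * (\<rho>$i*\<nu>$i)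
       + 2*\<sigma>/r * ?S * (\<rho>$i*\<nu>$i * ?col i) + \<sigma>\<^sup>2 * ?S\<^sup>2 / n" for i
    using r by (simp add: rr[symmetric] field_simps power2_eq_square)
  have cols: "(\<Sum>i\<in>UNIV. \<rho>$i*\<nu>$i * ?col i) = (\<Sum>i\<in>UNIV. \<Sum>j\<in>UNIV. \<rho>$j*\<nu>$j*zQ$i$j)"
    by (subst sum.swap) (simp add: sum_distrib_left)
  have principal: "(\<Sum>i\<in>UNIV. (\<nu>$i - \<nu>$i * ?col i - \<rho>$i * \<sigma> / r * ?S)\<^sup>2
        + (1 - (\<rho>$i)\<^sup>2) * \<sigma>\<^sup>2 / n * ?S\<^sup>2)
     = (\<Sum>i\<in>UNIV. (\<nu>$i)^2) - 2 * (\<Sum>j\<in>UNIV. (\<nu>$j)^2 * ?col j)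
        + (\<Sum>j\<in>UNIV. (\<nu>$j)^2 * (?col j)^2)
        - 2*\<sigma>/r * ?S * (\<Sum>i\<in>UNIV. \<rho>$i*\<nu>$i)
        + 2*\<sigma>/r * ?S * (\<Sum>i\<in>UNIV. \<Sum>j\<in>UNIV. \<rho>$j*\<nu>$j*zQ$i$j)
        + \<sigma>\<^sup>2 * ?S\<^sup>2"
    unfolding square cols[symmetric] using n
    by (simp add: sum.distrib sum_subtractf sum_distrib_left[symmetric]
        sum_divide_distrib[symmetric] n_def)
  have t1: "(\<Sum>i\<in>UNIV. (zQ$i$i)\<^sup>2 / (2 * c$i)) = 1/2 * (\<Sum>j\<in>UNIV. (zQ$j$j)^2 / c$j)"
    by (simp add: sum_distrib_left)
  have t2: "(\<Sum>i\<in>UNIV. \<gamma>$i / 2 * (\<Sum>j\<in>UNIV. (\<nu>$j)\<^sup>2 * (zQ$i$j)\<^sup>2))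
     = 1/2 * (\<Sum>i\<in>UNIV. \<Sum>j\<in>UNIV. (\<nu>$j)^2 * \<gamma>$i * (zQ$i$j)^2)"
    by (simp add: sum_distrib_left mult_ac)
  have t3: "(\<Sum>i\<in>UNIV. \<gamma>$i * \<sigma>\<^sup>2 / 2 * (zS$i)\<^sup>2) = \<sigma>\<^sup>2/2 * (\<Sum>k\<in>UNIV. \<gamma>$k * (zS$k)^2)"
    by (simp add: sum_distrib_left mult_ac)
  have t4: "(\<Sum>i\<in>UNIV. \<gamma>$i * \<sigma> / r * zS$i * (\<Sum>j\<in>UNIV. \<rho>$j * \<nu>$j * zQ$i$j))
     = \<sigma>/r * (\<Sum>i\<in>UNIV. \<gamma>$i * zS$i * (\<Sum>j\<in>UNIV. \<rho>$j*\<nu>$j*zQ$i$j))"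
    by (simp add: sum_distrib_left mult_ac)
  show ?thesis
    unfolding fobj_def Let_def n_def[symmetric] r_def[symmetric]
    by (simp only: principal) (simp only: sum.distrib sum_subtractf t1 t2 t3 t4)
qed

lemma fobj_eq_quadratic:
  "fobj \<sigma> \<gamma>P c \<gamma> \<nu> \<rho> (fst w) (snd w) =
    quadratic (Hfull \<sigma> \<gamma>P c \<gamma> \<nu> \<rho>) (bfull \<sigma> \<gamma>P c \<nu> \<rho>) (stack_pair w)
    - \<gamma>P / (2 * (real CARD('n))^2) * (\<Sum>i\<in>UNIV. (\<nu>$i)^2)"
  for \<nu> :: "real^'n"
proof -
  define n where "n = real CARD('n)"
  define r where "r = sqrt n"
  have r: "r > 0" and rr: "r^2 = n"
    unfolding n_def r_def by simp_all
  show ?thesis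
    unfolding quadratic_def stack_pair_def fobj_expand inner_Hfull_stack inner_bfull_stack
      n_def[symmetric] r_def[symmetric]
    using r by (simp add: rr[symmetric] field_simps power2_eq_square)
qed

lemma sum_gamma_sum_squares:
  fixes zQ :: "real^'n^'n"
  defines "n \<equiv> real CARD('n)"
  defines "r \<equiv> sqrt n"
  shows "(\<Sum>i\<in>UNIV. \<gamma>$i * (\<Sum>j\<in>UNIV. (\<nu>$j * zQ$i$j + \<sigma>*\<rho>$j/r * zS$i)^2))
     = (\<Sum>i\<in>UNIV. \<Sum>j\<in>UNIV. (\<nu>$j)^2 * \<gamma>$i * (zQ$i$j)^2)
       + 2*\<sigma>/r * (\<Sum>i\<in>UNIV. \<gamma>$i * zS$i * (\<Sum>j\<in>UNIV. \<rho>$j*\<nu>$j*zQ$i$j))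
       + \<sigma>\<^sup>2/n * (\<Sum>j\<in>UNIV. (\<rho>$j)^2) * (\<Sum>k\<in>UNIV. \<gamma>$k * (zS$k)^2)"
proof -
  let ?R2 = "\<Sum>j\<in>UNIV. (\<rho>$j)^2"
  have r: "r > 0" and rr: "r^2 = n"
    unfolding n_def r_def by simp_all
  have square_agent: "(\<nu>$j * zQ$i$j + \<sigma>*\<rho>$j/r * zS$i)^2
     = (\<nu>$j)^2 * (zQ$i$j)^2 + 2*\<sigma>/r * zS$i * (\<rho>$j*\<nu>$j*zQ$i$j) + \<sigma>\<^sup>2/n * (zS$i)^2 * (\<rho>$j)^2"
    for i j using r by (simp add: rr[symmetric] field_simps power2_eq_square)
  have row: "\<gamma>$i * (\<Sum>j\<in>UNIV. (\<nu>$j * zQ$i$j + \<sigma>*\<rho>$j/r * zS$i)^2)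
     = \<gamma>$i * (\<Sum>j\<in>UNIV. (\<nu>$j)^2 * (zQ$i$j)^2)
       + \<gamma>$i * (2*\<sigma>/r * zS$i * (\<Sum>j\<in>UNIV. \<rho>$j*\<nu>$j*zQ$i$j))
       + \<gamma>$i * (\<sigma>\<^sup>2/n * (zS$i)^2 * ?R2)" for i
    unfolding square_agent by (simp only: sum.distrib sum_distrib_left[symmetric] distrib_left)
  have "(\<Sum>i\<in>UNIV. \<gamma>$i * (\<Sum>j\<in>UNIV. (\<nu>$j)^2 * (zQ$i$j)^2))
      = (\<Sum>i\<in>UNIV. \<Sum>j\<in>UNIV. (\<nu>$j)^2 * \<gamma>$i * (zQ$i$j)^2)"
    by (simp add: sum_distrib_left mult_ac)
  moreover have "(\<Sum>i\<in>UNIV. \<gamma>$i * (2*\<sigma>/r * zS$i * (\<Sum>j\<in>UNIV. \<rho>$j*\<nu>$j*zQ$i$j)))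
      = 2*\<sigma>/r * (\<Sum>i\<in>UNIV. \<gamma>$i * zS$i * (\<Sum>j\<in>UNIV. \<rho>$j*\<nu>$j*zQ$i$j))"
    by (simp add: sum_distrib_left mult_ac)
  moreover have "(\<Sum>i\<in>UNIV. \<gamma>$i * (\<sigma>\<^sup>2/n * (zS$i)^2 * ?R2))
      = \<sigma>\<^sup>2/n * ?R2 * (\<Sum>k\<in>UNIV. \<gamma>$k * (zS$k)^2)"
    unfolding sum_distrib_left[of "\<sigma>\<^sup>2/n * ?R2" "\<lambda>k. \<gamma>$k * (zS$k)^2" UNIV]
    by (rule sum.cong) (simp_all add: mult_ac)
  ultimately show ?thesis
    unfolding row sum.distrib by simp
qed

lemma inner_Hfull_stack_sos:
  fixes zQ :: "real^'n^'n"
  defines "n \<equiv> real CARD('n)"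
  defines "r \<equiv> sqrt n"
  shows "inner (stack (vecm zQ) zS) (Hfull \<sigma> \<gamma>P c \<gamma> \<nu> \<rho> *v stack (vecm zQ) zS) =
   - 1/n * ((\<Sum>j\<in>UNIV. (zQ$j$j)^2 / c$j)
            + (\<Sum>i\<in>UNIV. \<gamma>$i * (\<Sum>j\<in>UNIV. (\<nu>$j * zQ$i$j + \<sigma>*\<rho>$j/r * zS$i)^2))
            + \<sigma>\<^sup>2 * (1 - (\<Sum>j\<in>UNIV. (\<rho>$j)^2)/n) * (\<Sum>k\<in>UNIV. \<gamma>$k * (zS$k)^2))
   - \<gamma>P/n^2 * (\<Sum>i\<in>UNIV. (\<nu>$i * (\<Sum>k\<in>UNIV. zQ$k$i) + \<rho>$i*\<sigma>/r * (\<Sum>k\<in>UNIV. zS$k))^2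
                    + (1 - (\<rho>$i)^2) * \<sigma>\<^sup>2 / n * (\<Sum>k\<in>UNIV. zS$k)^2)"
proof -
  have n: "n > 0" and r: "r > 0" and rr: "r^2 = n"
    unfolding n_def r_def by simp_all
  let ?S = "\<Sum>k\<in>UNIV. zS$k"
  let ?col = "\<lambda>i. \<Sum>j\<in>UNIV. zQ$j$i"
  have square_principal: "(\<nu>$i * ?col i + \<rho>$i*\<sigma>/r * ?S)^2 + (1 - (\<rho>$i)^2) * \<sigma>\<^sup>2 / n * ?S^2
     = (\<nu>$i)^2 * (?col i)^2 + 2*\<sigma>/r * ?S * (\<rho>$i*\<nu>$i * ?col i) + \<sigma>\<^sup>2 * ?S^2 / n" for i
    using r by (simp add: rr[symmetric] field_simps power2_eq_square)
  have cols: "(\<Sum>i\<in>UNIV. \<rho>$i*\<nu>$i * ?col i) = (\<Sum>i\<in>UNIV. \<Sum>j\<in>UNIV. \<rho>$j*\<nu>$j*zQ$i$j)"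
    by (subst sum.swap) (simp add: sum_distrib_left)
  have principal: "(\<Sum>i\<in>UNIV. (\<nu>$i * ?col i + \<rho>$i*\<sigma>/r * ?S)^2 + (1 - (\<rho>$i)^2) * \<sigma>\<^sup>2 / n * ?S^2)
     = (\<Sum>j\<in>UNIV. (\<nu>$j)^2 * (?col j)^2)
       + 2*\<sigma>/r * ?S * (\<Sum>i\<in>UNIV. \<Sum>j\<in>UNIV. \<rho>$j*\<nu>$j*zQ$i$j) + \<sigma>\<^sup>2 * ?S^2"
    unfolding square_principal cols[symmetric] using n
    by (simp add: sum.distrib sum_distrib_left[symmetric] sum_divide_distrib[symmetric] n_def)
  show ?thesis
    unfolding inner_Hfull_stack principal n_def[symmetric] r_def[symmetric]
      sum_gamma_sum_squares[where zQ = zQ, folded n_def, folded r_def]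
    using n r by (simp add: rr[symmetric] field_simps power2_eq_square)
qed

section \<open>Negative definiteness and the explicit critical point\<close>

text \<open>\<open>Diag s - y s s\<^sup>T\<close> with \<open>y = t / (1 + t \<Sum> s)\<close> is the Sherman--Morrison inverse of
  \<open>Diag s\<^sup>-\<^sup>1 + t J\<close>.\<close>

lemma diagonal_rank_one_solution:
  fixes s v :: "real^'n" and t :: real
  assumes "1 + t * (\<Sum>i\<in>UNIV. s$i) \<noteq> 0"
  defines "z \<equiv> (Diag s - (t / (1 + t * (\<Sum>i\<in>UNIV. s$i))) *\<^sub>R (\<chi> i j. s$i * s$j)) *v v"
  shows "z$k = s$k * (v$k - t * (\<Sum>l\<in>UNIV. z$l))"
proof -
  define y where "y = t / (1 + t * (\<Sum>i\<in>UNIV. s$i))"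
  define sv where "sv = (\<Sum>j\<in>UNIV. s$j * v$j)"
  have z: "z$i = s$i * v$i - y * s$i * sv" for i
    unfolding z_def y_def[symmetric] sv_def
    by (simp add: matrix_vector_mult_def Diag_def right_diff_distrib sum_subtractf mult_if_zero
        sum_distrib_left mult_ac)
  have "t * (\<Sum>l\<in>UNIV. z$l) = t * (sv - y * (\<Sum>i\<in>UNIV. s$i) * sv)"
    unfolding z sum_subtractf sv_def[symmetric] by (simp add: sum_distrib_left sum_distrib_right)
  also have "\<dots> = y * sv"
    using assms(1) unfolding y_def by (simp add: field_simps)
  finally show ?thesis
    unfolding z by (simp add: algebra_simps)
qed

text \<open>The quantity squared in the \<open>\<gamma>P\<close>-part of the objective; at the critical point it
  equals \<open>K\<^sub>j\<close>.\<close>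

definition residual :: "real \<Rightarrow> real^'n \<Rightarrow> real^'n \<Rightarrow> real^'n^'n \<Rightarrow> real^'n \<Rightarrow> 'n \<Rightarrow> real" where
  "residual \<sigma> \<nu> \<rho> zQ zS j =
    \<nu>$j - \<nu>$j * (\<Sum>i\<in>UNIV. zQ$i$j) - \<rho>$j * \<sigma> / sqrt (real CARD('n)) * (\<Sum>k\<in>UNIV. zS$k)"

locale model_parameters =
  fixes \<sigma> \<gamma>P :: real and c \<gamma> \<nu> \<rho> :: "real^'n"
  assumes sigma_pos: "\<sigma> > 0" and gammaP_pos: "\<gamma>P > 0"
    and c_pos: "\<And>i. c$i > 0" and gamma_pos: "\<And>i. \<gamma>$i > 0" and nu_pos: "\<And>i. \<nu>$i > 0"
    and rho_bounds: "\<And>i. -1 < \<rho>$i \<and> \<rho>$i < 1"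
begin

lemma sum_rho_sq_less_card: "(\<Sum>j\<in>UNIV. (\<rho>$j)^2) < real CARD('n)"
proof -
  have "(\<rho>$j)^2 < 1" for j
    using rho_bounds by (simp add: abs_square_less_1 abs_less_iff)
  then have "(\<Sum>j\<in>UNIV. (\<rho>$j)^2) < (\<Sum>j\<in>(UNIV::'n set). 1)"
    by (intro sum_strict_mono) auto
  then show ?thesis
    by simp
qed

lemma inner_Hfull_stack_le:
  fixes zQ :: "real^'n^'n"
  defines "n \<equiv> real CARD('n)"
  shows "inner (stack (vecm zQ) zS) (Hfull \<sigma> \<gamma>P c \<gamma> \<nu> \<rho> *v stack (vecm zQ) zS) \<le>
    - 1/n * ((\<Sum>i\<in>UNIV. \<gamma>$i * (\<Sum>j\<in>UNIV. (\<nu>$j * zQ$i$j + \<sigma>*\<rho>$j/sqrt n * zS$i)^2))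
      + \<sigma>^2 * (1 - (\<Sum>j\<in>UNIV. (\<rho>$j)^2)/n) * (\<Sum>k\<in>UNIV. \<gamma>$k * (zS$k)^2))"
proof -
  have n: "n > 0"
    unfolding n_def by simp
  have "(\<Sum>j\<in>UNIV. (zQ$j$j)^2 / c$j) \<ge> 0"
    using c_pos by (intro sum_nonneg) (simp add: less_imp_le)
  moreover have "(\<rho>$i)^2 \<le> 1" for i
    using rho_bounds[of i] by (simp add: abs_square_le_1 abs_le_iff less_imp_le)
  then have "(\<Sum>i\<in>UNIV. (\<nu>$i * (\<Sum>k\<in>UNIV. zQ$k$i) + \<rho>$i*\<sigma>/sqrt n * (\<Sum>k\<in>UNIV. zS$k))^2
      + (1 - (\<rho>$i)^2) * \<sigma>^2 / n * (\<Sum>k\<in>UNIV. zS$k)^2) \<ge> 0"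
    using n by (intro sum_nonneg add_nonneg_nonneg) (auto intro!: mult_nonneg_nonneg)
  ultimately show ?thesis
    unfolding inner_Hfull_stack_sos n_def[symmetric]
    using n gammaP_pos by (simp add: field_simps)
qed

lemma inner_Hfull_bound_pos:
  fixes zQ :: "real^'n^'n"
  defines "n \<equiv> real CARD('n)"
  assumes "(zQ, zS) \<noteq> 0"
  shows "(\<Sum>i\<in>UNIV. \<gamma>$i * (\<Sum>j\<in>UNIV. (\<nu>$j * zQ$i$j + \<sigma>*\<rho>$j/sqrt n * zS$i)^2))
      + \<sigma>^2 * (1 - (\<Sum>j\<in>UNIV. (\<rho>$j)^2)/n) * (\<Sum>k\<in>UNIV. \<gamma>$k * (zS$k)^2) > 0"
    (is "?agents + \<sigma>^2 * ?share * ?idio > 0")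
proof -
  have "?agents \<ge> 0" and "?idio \<ge> 0"
    using gamma_pos by (auto intro!: sum_nonneg mult_nonneg_nonneg simp: less_imp_le)
  moreover have "?share > 0"
    using sum_rho_sq_less_card unfolding n_def by (simp add: field_simps)
  moreover have "?agents > 0 \<or> ?idio > 0"
  proof (cases "zS = 0")
    case True
    with assms(2) have "zQ \<noteq> 0"
      by (simp add: zero_prod_def)
    then obtain i j where "zQ$i$j \<noteq> 0"
      by (auto simp: vec_eq_iff)
    then have "(\<nu>$j * zQ$i$j + \<sigma>*\<rho>$j/sqrt n * zS$i)^2 > 0"
      using True nu_pos[of j] by simp
    then have "\<gamma>$i * (\<Sum>j\<in>UNIV. (\<nu>$j * zQ$i$j + \<sigma>*\<rho>$j/sqrt n * zS$i)^2) > 0"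
      using gamma_pos[of i] by (intro mult_pos_pos sum_pos2[of UNIV j]) auto
    then have "?agents > 0"
      using less_imp_le[OF gamma_pos] by (intro sum_pos2[of UNIV i]) (auto intro!: mult_nonneg_nonneg sum_nonneg)
    then show ?thesis ..
  next
    case False
    then obtain k where "zS$k \<noteq> 0"
      by (auto simp: vec_eq_iff)
    then have "?idio > 0"
      using gamma_pos by (intro sum_pos2[of _ k]) (auto simp: less_imp_le)
    then show ?thesis ..
  qed
  ultimately show ?thesis
    using sigma_pos by (auto intro: add_pos_nonneg add_nonneg_pos)
qed

lemma negative_definite_Hfull: "negative_definite (Hfull \<sigma> \<gamma>P c \<gamma> \<nu> \<rho>)"
  unfolding negative_definite_def
proof (intro allI impI)
  fix X :: "real^(('n \<times> 'n) + 'n)"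
  assume "X \<noteq> 0"
  obtain zQ zS where X: "X = stack (vecm zQ) zS"
    using bij_stack_pair by (metis bij_pointE stack_pair_def)
  have "(zQ, zS) \<noteq> 0"
  proof
    assume "(zQ, zS) = 0"
    then have "X = 0"
      unfolding X by (simp add: zero_prod_def vec_eq_iff stack_def vecm_def split: sum.split)
    with \<open>X \<noteq> 0\<close> show False ..
  qed
  moreover have "- 1 / real CARD('n) * B < 0" if "B > 0" for B :: real
    using that by (simp add: field_simps)
  ultimately show "inner X (Hfull \<sigma> \<gamma>P c \<gamma> \<nu> \<rho> *v X) < 0"
    unfolding X using inner_Hfull_stack_le[of zQ zS] inner_Hfull_bound_pos[of zQ zS]
    by (meson le_less_trans)
qed

lemma Hfull_stack_add_bfull_Inl:
  fixes zQ :: "real^'n^'n"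
  defines "n \<equiv> real CARD('n)"
  shows "(Hfull \<sigma> \<gamma>P c \<gamma> \<nu> \<rho> *v stack (vecm zQ) zS + bfull \<sigma> \<gamma>P c \<nu> \<rho>) $ Inl (i, j) =
    - ((\<nu>$j)^2 * \<gamma>$i * zQ$i$j + \<sigma> / sqrt n * \<rho>$j * \<nu>$j * \<gamma>$i * zS$i
        + (if i = j then (zQ$j$j - 1) / c$j else 0)) / n
    + \<gamma>P / n^2 * \<nu>$j * residual \<sigma> \<nu> \<rho> zQ zS j"
proof -
  define r where "r = sqrt n"
  have n: "n > 0" and r: "r > 0"
    unfolding n_def r_def by simp_all
  have b: "bfull \<sigma> \<gamma>P c \<nu> \<rho> $ Inl (i, j) = (if i = j then 1 / (n * c$i) else 0) + \<gamma>P / n^2 * (\<nu>$j)^2"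
    unfolding bfull_def bQ_def Let_def n_def by simp
  show ?thesis
    unfolding vector_add_component Hfull_stack_Inl b residual_def n_def[symmetric] r_def[symmetric]
    using n r c_pos[of j]
    by (cases "i = j") (simp_all add: field_simps power2_eq_square)
qed

lemma Hfull_stack_add_bfull_Inr:
  fixes zQ :: "real^'n^'n"
  defines "n \<equiv> real CARD('n)"
  shows "(Hfull \<sigma> \<gamma>P c \<gamma> \<nu> \<rho> *v stack (vecm zQ) zS + bfull \<sigma> \<gamma>P c \<nu> \<rho>) $ Inr k =
    - \<gamma>$k * \<sigma>^2 / n * zS$k - \<sigma> / (n * sqrt n) * \<gamma>$k * (\<Sum>j\<in>UNIV. \<rho>$j * \<nu>$j * zQ$k$j)
    + \<gamma>P * \<sigma> / (n^2 * sqrt n) * (\<Sum>j\<in>UNIV. \<rho>$j * residual \<sigma> \<nu> \<rho> zQ zS j)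
    - lambdacoef \<sigma> \<gamma>P \<rho> * (\<Sum>l\<in>UNIV. zS$l)"
proof -
  define r where "r = sqrt n"
  define S where "S = (\<Sum>l\<in>UNIV. zS$l)"
  define R2 where "R2 = (\<Sum>j\<in>UNIV. (\<rho>$j)^2)"
  have n: "n > 0" and r: "r > 0" and rr: "r^2 = n"
    unfolding n_def r_def by simp_all
  have res: "(\<Sum>j\<in>UNIV. \<rho>$j * residual \<sigma> \<nu> \<rho> zQ zS j)
      = (\<Sum>j\<in>UNIV. \<rho>$j * \<nu>$j) - (\<Sum>i\<in>UNIV. \<Sum>j\<in>UNIV. \<rho>$j * \<nu>$j * zQ$i$j)
        - \<sigma> / r * R2 * S"
    unfolding residual_def n_def[symmetric] r_def[symmetric] S_def[symmetric] R2_def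
    by (subst sum.swap) (simp add: right_diff_distrib sum_subtractf sum_distrib_left
        sum_distrib_right power2_eq_square mult_ac sum_divide_distrib)
  have lam: "lambdacoef \<sigma> \<gamma>P \<rho> = \<gamma>P * \<sigma>^2 / n^3 * (n - R2)"
    unfolding lambdacoef_def R2_def n_def by (simp add: sum_subtractf)
  have b: "bfull \<sigma> \<gamma>P c \<nu> \<rho> $ Inr k = \<gamma>P * \<sigma> / (n^2 * r) * (\<Sum>i\<in>UNIV. \<rho>$i * \<nu>$i)"
    unfolding bfull_def bS_def Let_def n_def[symmetric] r_def
    using n by (simp add: powr_five_halves)
  show ?thesis
    unfolding vector_add_component Hfull_stack_Inr b res lam n_def[symmetric] r_def[symmetric]
      S_def[symmetric]
    using n r by (simp add: rr[symmetric] field_simps power2_eq_square) algebra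
qed

lemma Acoef_gt: "Acoef c \<gamma> \<nu> i > \<gamma>$i"
  unfolding Acoef_def using c_pos[of i] nu_pos[of i] by simp

lemma Acoef_pos: "Acoef c \<gamma> \<nu> i > 0"
  using Acoef_gt[of i] gamma_pos by (metis order.strict_trans)

lemma gamma_div_Acoef_less_1: "\<gamma>$i / Acoef c \<gamma> \<nu> i < 1"
  using Acoef_gt[of i] Acoef_pos[of i] by simp

lemma kappacoef_eq:
  "kappacoef \<gamma>P c \<gamma> \<nu> i = 1 + (\<Sum>l\<in>UNIV. alphacoef \<gamma>P \<gamma> l) - alphacoef \<gamma>P \<gamma> i
     + \<gamma>P / (real CARD('n) * Acoef c \<gamma> \<nu> i)"
proof -
  have "(\<Sum>l\<in>UNIV. alphacoef \<gamma>P \<gamma> l) = \<gamma>P / real CARD('n) * (\<Sum>l\<in>UNIV. 1 / \<gamma>$l)"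
    unfolding alphacoef_def by (simp add: sum_distrib_left)
  then show ?thesis
    unfolding kappacoef_def alphacoef_def
    using gamma_pos[of i] Acoef_pos[of i] by (simp add: field_simps)
qed

lemma kappacoef_pos: "kappacoef \<gamma>P c \<gamma> \<nu> i > 0"
proof -
  have "alphacoef \<gamma>P \<gamma> i \<le> (\<Sum>l\<in>UNIV. alphacoef \<gamma>P \<gamma> l)"
    using gammaP_pos gamma_pos
    by (intro member_le_sum) (auto simp: alphacoef_def less_imp_le)
  moreover have "\<gamma>P / (real CARD('n) * Acoef c \<gamma> \<nu> i) > 0"
    using gammaP_pos Acoef_pos[of i] by simp
  ultimately show ?thesis
    unfolding kappacoef_eq by linarith
qed

lemma mucoef_pos: "mucoef \<sigma> \<gamma>P c \<gamma> \<nu> \<rho> i > 0"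
proof -
  define n where "n = real CARD('n)"
  have n: "n > 0"
    unfolding n_def by simp
  have "1 - 1 / n * (\<Sum>j\<in>UNIV. (\<rho>$j)^2) > 0"
    using sum_rho_sq_less_card n unfolding n_def by (simp add: field_simps)
  moreover have "(1 - \<gamma>$i / Acoef c \<gamma> \<nu> i) * (\<rho>$i)^2 / n \<ge> 0"
    using gamma_div_Acoef_less_1[of i] n by simp
  ultimately have "1 - 1 / n * (\<Sum>j\<in>UNIV. (\<rho>$j)^2) + (1 - \<gamma>$i / Acoef c \<gamma> \<nu> i) * (\<rho>$i)^2 / n > 0"
    by linarith
  then have "\<gamma>$i * \<sigma>^2 / n
      * (1 - 1 / n * (\<Sum>j\<in>UNIV. (\<rho>$j)^2) + (1 - \<gamma>$i / Acoef c \<gamma> \<nu> i) * (\<rho>$i)^2 / n) > 0"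
    using gamma_pos[of i] sigma_pos n by (intro mult_pos_pos divide_pos_pos) simp_all
  moreover have "\<gamma>P * \<sigma>^2 * (\<rho>$i)^2 / (kappacoef \<gamma>P c \<gamma> \<nu> i * n ^ 3)
      * (1 - \<gamma>$i / Acoef c \<gamma> \<nu> i)^2 \<ge> 0"
    using gammaP_pos kappacoef_pos[of i] n by simp
  ultimately show ?thesis
    unfolding mucoef_def Let_def n_def[symmetric] by linarith
qed

lemma lambdacoef_pos: "lambdacoef \<sigma> \<gamma>P \<rho> > 0"
  using sum_rho_sq_less_card gammaP_pos sigma_pos by (simp add: lambdacoef_def sum_subtractf)

lemma mucoef_zSstar:
  "mucoef \<sigma> \<gamma>P c \<gamma> \<nu> \<rho> k * zSstar \<sigma> \<gamma>P c \<gamma> \<nu> \<rho> $ k =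
    ellcoef \<sigma> \<gamma>P c \<gamma> \<nu> \<rho> k - lambdacoef \<sigma> \<gamma>P \<rho> * (\<Sum>l\<in>UNIV. zSstar \<sigma> \<gamma>P c \<gamma> \<nu> \<rho> $ l)"
proof -
  let ?s = "svec \<sigma> \<gamma>P c \<gamma> \<nu> \<rho>"
  have "1 + lambdacoef \<sigma> \<gamma>P \<rho> * (\<Sum>i\<in>UNIV. ?s $ i) > 0"
    using lambdacoef_pos mucoef_pos
    by (intro add_pos_nonneg mult_nonneg_nonneg sum_nonneg) (auto simp: svec_def less_imp_le)
  then have "zSstar \<sigma> \<gamma>P c \<gamma> \<nu> \<rho> $ k = ?s $ k
      * (ellcoef \<sigma> \<gamma>P c \<gamma> \<nu> \<rho> k - lambdacoef \<sigma> \<gamma>P \<rho> * (\<Sum>l\<in>UNIV. zSstar \<sigma> \<gamma>P c \<gamma> \<nu> \<rho> $ l))"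
    using diagonal_rank_one_solution[of "lambdacoef \<sigma> \<gamma>P \<rho>" ?s "ellvec \<sigma> \<gamma>P c \<gamma> \<nu> \<rho>" k]
    by (simp add: zSstar_def ycoef_def ellvec_def Let_def)
  moreover have "mucoef \<sigma> \<gamma>P c \<gamma> \<nu> \<rho> k * ?s $ k = 1"
    using mucoef_pos[of k] by (simp add: svec_def)
  ultimately show ?thesis
    by (metis mult.assoc mult_1)
qed

lemma Kfun_mult_kappacoef:
  "Kfun \<sigma> \<gamma>P c \<gamma> \<nu> \<rho> j zS * kappacoef \<gamma>P c \<gamma> \<nu> j =
    \<nu>$j - 1 / (c$j * \<nu>$j * Acoef c \<gamma> \<nu> j)
    - \<sigma> / sqrt (real CARD('n)) * \<rho>$j * (1 - \<gamma>$j / Acoef c \<gamma> \<nu> j) * zS$j"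
  unfolding Kfun_def dcoef_def mcoef_def
  using kappacoef_pos[of j] by (simp add: field_simps)

abbreviation "zS_star \<equiv> zSstar \<sigma> \<gamma>P c \<gamma> \<nu> \<rho>"
abbreviation "q_star \<equiv> qstar \<sigma> \<gamma>P c \<gamma> \<nu> \<rho>"
abbreviation "K_star j \<equiv> Kfun \<sigma> \<gamma>P c \<gamma> \<nu> \<rho> j zS_star"

lemma qstar_offdiag:
  "i \<noteq> j \<Longrightarrow>
    q_star i j = alphacoef \<gamma>P \<gamma> i * K_star j - \<sigma> / sqrt (real CARD('n)) * \<rho>$j * zS_star$i"
  by (simp add: qstar_def Let_def)

lemma qstar_diag:
  "q_star j j = (\<gamma>P / real CARD('n) * K_star j
      - \<gamma>$j * \<sigma> / sqrt (real CARD('n)) * \<rho>$j * zS_star$j + 1 / (c$j * \<nu>$j)) / Acoef c \<gamma> \<nu> j"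
  by (simp add: qstar_def Let_def)

lemma sum_qstar_column:
  "(\<Sum>i\<in>UNIV. q_star i j) =
    \<nu>$j - \<rho>$j * \<sigma> / sqrt (real CARD('n)) * (\<Sum>l\<in>UNIV. zS_star$l) - K_star j"
proof -
  define n where "n = real CARD('n)"
  define r where "r = sqrt n"
  define A where "A = Acoef c \<gamma> \<nu> j"
  define \<kappa> where "\<kappa> = kappacoef \<gamma>P c \<gamma> \<nu> j"
  define \<alpha> where "\<alpha> = (\<Sum>l\<in>UNIV. alphacoef \<gamma>P \<gamma> l)"
  define S where "S = (\<Sum>l\<in>UNIV. zS_star$l)"
  have n: "n > 0" and r: "r > 0" and A: "A > 0" and \<kappa>: "\<kappa> > 0"
    using Acoef_pos kappacoef_pos unfolding n_def r_def A_def \<kappa>_def by simp_all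
  have "(\<Sum>i\<in>UNIV - {j}. q_star i j)
      = (\<Sum>i\<in>UNIV - {j}. alphacoef \<gamma>P \<gamma> i * K_star j - \<sigma> / r * \<rho>$j * zS_star$i)"
    by (rule sum.cong) (auto simp: qstar_offdiag r_def n_def)
  also have "\<dots> = (\<Sum>i\<in>UNIV - {j}. alphacoef \<gamma>P \<gamma> i) * K_star j
      - \<sigma> / r * \<rho>$j * (\<Sum>i\<in>UNIV - {j}. zS_star$i)"
    by (simp add: sum_subtractf sum_distrib_left sum_distrib_right)
  also have "\<dots> = (\<alpha> - alphacoef \<gamma>P \<gamma> j) * K_star j - \<sigma> / r * \<rho>$j * (S - zS_star$j)"
    by (simp add: sum_diff1 \<alpha>_def S_def)
  finally have column: "(\<Sum>i\<in>UNIV. q_star i j)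
      = q_star j j + (\<alpha> - alphacoef \<gamma>P \<gamma> j) * K_star j - \<sigma> / r * \<rho>$j * (S - zS_star$j)"
    using sum.remove[of UNIV j "\<lambda>i. q_star i j"] by simp
  have \<alpha>: "\<alpha> - alphacoef \<gamma>P \<gamma> j = \<kappa> - 1 - \<gamma>P / (n * A)"
    using kappacoef_eq[of j] unfolding \<kappa>_def \<alpha>_def n_def A_def by simp
  have K: "K_star j = (\<nu>$j - 1 / (c$j * \<nu>$j * A) - \<sigma> / r * \<rho>$j * (1 - \<gamma>$j / A) * zS_star$j) / \<kappa>"
    using Kfun_mult_kappacoef[of j zS_star] \<kappa> unfolding \<kappa>_def A_def r_def n_def
    by (simp add: field_simps)
  show ?thesis
    unfolding column \<alpha> qstar_diag K n_def[symmetric] r_def[symmetric] A_def[symmetric] S_def[symmetric]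
    using n r A \<kappa> c_pos[of j] nu_pos[of j] by (simp add: field_simps)
qed

lemma residual_zQstar:
  "residual \<sigma> \<nu> \<rho> (zQstar \<sigma> \<gamma>P c \<gamma> \<nu> \<rho>) zS_star j = K_star j"
proof -
  have "\<nu>$j * (\<Sum>i\<in>UNIV. zQstar \<sigma> \<gamma>P c \<gamma> \<nu> \<rho> $ i $ j) = (\<Sum>i\<in>UNIV. q_star i j)"
    using nu_pos[of j] by (simp add: zQstar_def sum_divide_distrib[symmetric])
  then show ?thesis
    unfolding residual_def sum_qstar_column by (simp add: mult_ac)
qed

lemma qstar_first_order:
  "\<gamma>$i * q_star i j + \<sigma> / sqrt (real CARD('n)) * \<rho>$j * \<gamma>$i * zS_star$i
    + (if i = j then (q_star j j / \<nu>$j - 1) / (c$j * \<nu>$j) else 0)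
    = \<gamma>P / real CARD('n) * K_star j"
proof (cases "i = j")
  case True
  have "\<gamma>$j * q_star j j + q_star j j / (c$j * (\<nu>$j)^2) = Acoef c \<gamma> \<nu> j * q_star j j"
    unfolding Acoef_def by (simp add: algebra_simps)
  also have "\<dots> = \<gamma>P / real CARD('n) * K_star j
      - \<gamma>$j * \<sigma> / sqrt (real CARD('n)) * \<rho>$j * zS_star$j + 1 / (c$j * \<nu>$j)"
    using Acoef_pos[of j] unfolding qstar_diag by simp
  finally have diag: "\<gamma>$j * q_star j j + q_star j j / (c$j * (\<nu>$j)^2) = \<dots>" .
  have "(q_star j j / \<nu>$j - 1) / (c$j * \<nu>$j) = q_star j j / (c$j * (\<nu>$j)^2) - 1 / (c$j * \<nu>$j)"
    using c_pos[of j] nu_pos[of j] by (simp add: field_simps power2_eq_square)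
  with diag True show ?thesis
    by (simp add: algebra_simps)
next
  case False
  then show ?thesis
    using gamma_pos[of i] by (simp add: qstar_offdiag alphacoef_def field_simps)
qed

lemma Hfull_zstar_add_bfull_Inl:
  "(Hfull \<sigma> \<gamma>P c \<gamma> \<nu> \<rho> *v stack (vecm (zQstar \<sigma> \<gamma>P c \<gamma> \<nu> \<rho>)) zS_star
    + bfull \<sigma> \<gamma>P c \<nu> \<rho>) $ Inl (i, j) = 0"
proof -
  let ?zQ = "zQstar \<sigma> \<gamma>P c \<gamma> \<nu> \<rho>"
  have "(\<nu>$j)^2 * \<gamma>$i * ?zQ$i$j + \<sigma> / sqrt (real CARD('n)) * \<rho>$j * \<nu>$j * \<gamma>$i * zS_star$i
      + (if i = j then (?zQ$j$j - 1) / c$j else 0)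
      = \<nu>$j * (\<gamma>$i * q_star i j + \<sigma> / sqrt (real CARD('n)) * \<rho>$j * \<gamma>$i * zS_star$i
      + (if i = j then (q_star j j / \<nu>$j - 1) / (c$j * \<nu>$j) else 0))"
    using nu_pos[of j] c_pos[of j]
    by (cases "i = j") (simp_all add: zQstar_def field_simps power2_eq_square)
  then show ?thesis
    unfolding Hfull_stack_add_bfull_Inl qstar_first_order residual_zQstar
    by (simp add: power2_eq_square)
qed

lemma sum_rho_qstar_row:
  "(\<Sum>j\<in>UNIV. \<rho>$j * q_star k j) = (\<gamma>P / real CARD('n) * (\<Sum>j\<in>UNIV. \<rho>$j * K_star j)
    - \<sigma> / sqrt (real CARD('n)) * \<gamma>$k * zS_star$k * (\<Sum>j\<in>UNIV. (\<rho>$j)^2)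
    - \<rho>$k * ((q_star k k / \<nu>$k - 1) / (c$k * \<nu>$k))) / \<gamma>$k"
proof -
  have first_order: "\<gamma>$k * q_star k j = \<gamma>P / real CARD('n) * K_star j
      - \<sigma> / sqrt (real CARD('n)) * \<rho>$j * \<gamma>$k * zS_star$k
      - (if k = j then (q_star j j / \<nu>$j - 1) / (c$j * \<nu>$j) else 0)" for j
    using qstar_first_order[of k j] by linarith
  have "\<gamma>$k * (\<Sum>j\<in>UNIV. \<rho>$j * q_star k j) = (\<Sum>j\<in>UNIV. \<rho>$j * (\<gamma>$k * q_star k j))"
    by (simp add: sum_distrib_left mult_ac)
  also have "\<dots> = (\<Sum>j\<in>UNIV. \<rho>$j * (\<gamma>P / real CARD('n) * K_star j
      - \<sigma> / sqrt (real CARD('n)) * \<rho>$j * \<gamma>$k * zS_star$k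
      - (if k = j then (q_star j j / \<nu>$j - 1) / (c$j * \<nu>$j) else 0)))"
    by (simp only: first_order)
  also have "\<dots> = \<gamma>P / real CARD('n) * (\<Sum>j\<in>UNIV. \<rho>$j * K_star j)
      - \<sigma> / sqrt (real CARD('n)) * \<gamma>$k * zS_star$k * (\<Sum>j\<in>UNIV. (\<rho>$j)^2)
      - \<rho>$k * ((q_star k k / \<nu>$k - 1) / (c$k * \<nu>$k))"
    by (simp add: right_diff_distrib sum_subtractf sum_distrib_left sum_divide_distrib mult_if_zero
        power2_eq_square mult_ac)
  finally show ?thesis
    using gamma_pos[of k] by (simp add: field_simps)
qed

lemma ellcoef_eq:
  defines "n \<equiv> real CARD('n)"
  shows "ellcoef \<sigma> \<gamma>P c \<gamma> \<nu> \<rho> k =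
    \<sigma> / (n * sqrt n) * (\<rho>$k * ((q_star k k / \<nu>$k - 1) / (c$k * \<nu>$k)))
    + (mucoef \<sigma> \<gamma>P c \<gamma> \<nu> \<rho> k - \<gamma>$k * \<sigma>^2 / n * (1 - (\<Sum>j\<in>UNIV. (\<rho>$j)^2) / n))
      * zS_star$k"
proof -
  define r where "r = sqrt n"
  define A where "A = Acoef c \<gamma> \<nu> k"
  define \<kappa> where "\<kappa> = kappacoef \<gamma>P c \<gamma> \<nu> k"
  define d where "d = dcoef \<gamma>P c \<gamma> \<nu> k"
  have n: "n > 0" and r: "r > 0" and rr: "r^2 = n" and A: "A > 0" and \<kappa>: "\<kappa> > 0"
    using Acoef_pos kappacoef_pos unfolding n_def r_def A_def \<kappa>_def by simp_all
  have \<gamma>: "\<gamma>$k = A - 1 / (c$k * (\<nu>$k)^2)"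
    unfolding A_def Acoef_def by simp
  have p3: "n powr (3/2) = n * r" and p5: "n powr (5/2) = n^2 * r"
    unfolding r_def using n by (simp_all add: powr_three_halves powr_five_halves)
  show ?thesis
    unfolding ellcoef_def mucoef_def qstar_diag Kfun_def mcoef_def Let_def n_def[symmetric]
      r_def[symmetric] A_def[symmetric] \<kappa>_def[symmetric] d_def[symmetric] p3 p5
    unfolding \<gamma>
    using n r A \<kappa> c_pos[of k] nu_pos[of k]
    by (simp add: rr[symmetric] field_simps power2_eq_square power3_eq_cube)
qed

lemma Hfull_zstar_add_bfull_Inr:
  "(Hfull \<sigma> \<gamma>P c \<gamma> \<nu> \<rho> *v stack (vecm (zQstar \<sigma> \<gamma>P c \<gamma> \<nu> \<rho>)) zS_star
    + bfull \<sigma> \<gamma>P c \<nu> \<rho>) $ Inr k =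
    ellcoef \<sigma> \<gamma>P c \<gamma> \<nu> \<rho> k - mucoef \<sigma> \<gamma>P c \<gamma> \<nu> \<rho> k * zS_star$k
    - lambdacoef \<sigma> \<gamma>P \<rho> * (\<Sum>l\<in>UNIV. zS_star$l)"
proof -
  define n where "n = real CARD('n)"
  define r where "r = sqrt n"
  have n: "n > 0" and r: "r > 0" and rr: "r^2 = n"
    unfolding n_def r_def by simp_all
  have row: "(\<Sum>j\<in>UNIV. \<rho>$j * \<nu>$j * zQstar \<sigma> \<gamma>P c \<gamma> \<nu> \<rho> $ k $ j) = (\<Sum>j\<in>UNIV. \<rho>$j * q_star k j)"
    using nu_pos by (simp add: zQstar_def less_imp_neq[symmetric])
  show ?thesis
    unfolding Hfull_stack_add_bfull_Inr row residual_zQstar sum_rho_qstar_row ellcoef_eq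
      n_def[symmetric] r_def[symmetric]
    using n r gamma_pos[of k] nu_pos[of k] c_pos[of k]
    by (simp add: rr[symmetric] field_simps power2_eq_square)
qed

lemma Hfull_zstar_eq_neg_bfull:
  "Hfull \<sigma> \<gamma>P c \<gamma> \<nu> \<rho> *v stack (vecm (zQstar \<sigma> \<gamma>P c \<gamma> \<nu> \<rho>)) zS_star
    = - bfull \<sigma> \<gamma>P c \<nu> \<rho>"
proof -
  have "(Hfull \<sigma> \<gamma>P c \<gamma> \<nu> \<rho> *v stack (vecm (zQstar \<sigma> \<gamma>P c \<gamma> \<nu> \<rho>)) zS_star
      + bfull \<sigma> \<gamma>P c \<nu> \<rho>) $ a = 0" for a
  proof (cases a)
    case (Inl p)
    then show ?thesis
      using Hfull_zstar_add_bfull_Inl[of "fst p" "snd p"] by simp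
  next
    case (Inr k)
    then show ?thesis
      using Hfull_zstar_add_bfull_Inr[of k] mucoef_zSstar[of k] by simp
  qed
  then show ?thesis
    by (simp add: vec_eq_iff eq_neg_iff_add_eq_0)
qed

end

theorem mainTheorem1:
  fixes \<sigma> \<gamma>P :: real and c \<gamma> \<nu> \<rho> :: "real^'n"
  assumes "\<sigma> > 0" and "\<gamma>P > 0"
    and "\<forall>i. c$i > 0" and "\<forall>i. \<gamma>$i > 0" and "\<forall>i. \<nu>$i > 0"
    and "\<forall>i. -1 < \<rho>$i \<and> \<rho>$i < 1"
  shows "(\<exists>!z. \<forall>w. fobj \<sigma> \<gamma>P c \<gamma> \<nu> \<rho> (fst w) (snd w) \<le> fobj \<sigma> \<gamma>P c \<gamma> \<nu> \<rho> (fst z) (snd z))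
    \<and> (\<forall>zQ zS. GDERIV (\<lambda>w. fobj \<sigma> \<gamma>P c \<gamma> \<nu> \<rho> (fst w) (snd w)) (zQ, zS) :> 0
          \<longleftrightarrow> Hfull \<sigma> \<gamma>P c \<gamma> \<nu> \<rho> *v stack (vecm zQ) zS = - bfull \<sigma> \<gamma>P c \<nu> \<rho>)
    \<and> (\<exists>!x. Hfull \<sigma> \<gamma>P c \<gamma> \<nu> \<rho> *v x = - bfull \<sigma> \<gamma>P c \<nu> \<rho>)
    \<and> Hfull \<sigma> \<gamma>P c \<gamma> \<nu> \<rho> *v stack (vecm (zQstar \<sigma> \<gamma>P c \<gamma> \<nu> \<rho>)) (zSstar \<sigma> \<gamma>P c \<gamma> \<nu> \<rho>)
          = - bfull \<sigma> \<gamma>P c \<nu> \<rho>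
    \<and> (\<forall>w. fobj \<sigma> \<gamma>P c \<gamma> \<nu> \<rho> (fst w) (snd w)
          \<le> fobj \<sigma> \<gamma>P c \<gamma> \<nu> \<rho> (zQstar \<sigma> \<gamma>P c \<gamma> \<nu> \<rho>) (zSstar \<sigma> \<gamma>P c \<gamma> \<nu> \<rho>))"
proof -
  interpret model_parameters \<sigma> \<gamma>P c \<gamma> \<nu> \<rho>
    using assms by (simp add: model_parameters_def)
  let ?H = "Hfull \<sigma> \<gamma>P c \<gamma> \<nu> \<rho>" and ?b = "bfull \<sigma> \<gamma>P c \<nu> \<rho>"
  let ?F = "\<lambda>w. fobj \<sigma> \<gamma>P c \<gamma> \<nu> \<rho> (fst w) (snd w)"
  define z where "z = (zQstar \<sigma> \<gamma>P c \<gamma> \<nu> \<rho>, zS_star)"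
  define C where "C = - \<gamma>P / (2 * (real CARD('n))^2) * (\<Sum>i\<in>UNIV. (\<nu>$i)^2)"
  have F_eq: "?F w = quadratic ?H ?b (stack_pair w) + C" for w
    by (simp add: C_def fobj_eq_quadratic)
  then have F: "?F = (\<lambda>w. quadratic ?H ?b (stack_pair w) + C)" ..
  have critical: "?H *v stack_pair z = - ?b"
    using Hfull_zstar_eq_neg_bfull by (simp add: z_def stack_pair_def)
  have "?F w < ?F z" if "w \<noteq> z" for w
    using quadratic_less_critical[OF transpose_Hfull negative_definite_Hfull critical]
      that bij_stack_pair unfolding F_eq by (metis add_strict_right_mono bij_is_inj injD)
  note max = strict_maximum_unique[of z ?F, OF this]
  have "GDERIV ?F (zQ, zS) :> 0 \<longleftrightarrow> ?H *v stack (vecm zQ) zS = - ?b" for zQ zS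
    using GDERIV_quadratic_comp_zero_iff[OF transpose_Hfull bounded_linear_stack_pair
        bij_is_surj[OF bij_stack_pair], where z = "(zQ, zS)"]
    unfolding F by (simp add: stack_pair_def)
  moreover have "\<exists>!x. ?H *v x = - ?b"
    using critical negative_definite_solution_unique[OF negative_definite_Hfull] by metis
  ultimately show ?thesis
    using max Hfull_zstar_eq_neg_bfull by (simp add: z_def)
qed

end
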